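(* (1) The $\mathcal{A}$-algebra $\mathcal{U}^0_{\mathcal{A}}(\mathfrak{sl}_2)$ has $\mathcal{A}$-basis \[ \mathcal{B}=\left\{\begin{bmatrix}K;0\\ t\end{bmatrix}: t\ge 0\right\}\cup\left\{\begin{bmatrix}K;1\\ t\end{bmatrix}: t\ge 1\right\}. \] (2) The elements $F^{(a)}\begin{bmatrix}K;c\\ t\end{bmatrix}E^{(b)}$ for $a,b,t\in\mathbb{N}_0$ and $c\in\{0,\min(1,t)\}$ form an $\mathcal{A}$-basis of $\mathcal{U}_{\mathcal{A}}(\mathfrak{sl}_2)$.
   Context: Let $q$ be an indeterminate and $\mathcal{A}=\mathbb{Z}[q,q^{-1}]$. $\mathcal{U}_q(\mathfrak{sl}_2)$ is the unital associative $\mathbb{Q}(q)$-algebra generated by $E,F,K,K^{-1}$ subject to $KK^{-1}=K^{-1}K=1$, $KEK^{-1}=q^2E$, $KFK^{-1}=q^{-2}F$, $EF-FE=\frac{K-K^{-1}}{q-q^{-1}}$. Let $\{n\}_q=\frac{q^n-q^{-n}}{q-q^{-1}}$, $\{n\}_q!=\{n\}_q\cdots\{1\}_q$, $[K;a]=\frac{q^aK-q^{-a}K^{-1}}{q-q^{-1}}$ for $a\in\mathbb{Z}$, and $\begin{bmatrix}K;c\\ t\end{bmatrix}=\frac{[K;c][K;c-1]\cdots[K;c-t+1]}{\{t\}_q!}$ (equal to $1$ if $t=0$). The divided powers are $E^{(n)}=E^n/\{n\}_q!$, $F^{(n)}=F^n/\{n\}_q!$. Lusztig's integral form $\mathcal{U}_{\mathcal{A}}(\mathfrak{sl}_2)$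 is the $\mathcal{A}$-subalgebra generated by $E^{(n)},F^{(n)}$ ($n\in\mathbb{N}$), $K,K^{-1}$ and $\begin{bmatrix}K;0\\ t\end{bmatrix}$ ($t\in\mathbb{N}$); its Cartan subalgebra $\mathcal{U}^0_{\mathcal{A}}(\mathfrak{sl}_2)$ is the $\mathcal{A}$-subalgebra generated by $K,K^{-1}$ and $\begin{bmatrix}K;0\\ t\end{bmatrix}$ ($t\in\mathbb{N}$). *)

theory Defs
  imports "HOL-Library.Poly_Mapping" "HOL-Computational_Algebra.Fraction_Field"
    "HOL-Computational_Algebra.Polynomial"
begin

type_synonym qf = "rat poly fract"   (* the field Q(q) of rational functions *)

definition qq :: qf where "qq = Fraction_Field.Fract [:0, 1:] 1"

definition Laurent :: "qf set" where  (* A = Z[q,q^-1] inside Q(q) *)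
  "Laurent = {Fraction_Field.Fract (map_poly of_int p) 1 * qq powi n | (p :: int poly) (n :: int). True}"

definition qint :: "int \<Rightarrow> qf" where
  "qint n = (qq powi n - qq powi (-n)) / (qq - inverse qq)"

definition qfact :: "nat \<Rightarrow> qf" where
  "qfact n = (\<Prod>i\<in>{1..n}. qint (int i))"

datatype gen = GE | GF | GK | GKi

datatype word = Word "gen list"

instantiation word :: monoid_add
begin
definition zero_word :: word where "zero_word = Word []"
fun plus_word :: "word \<Rightarrow> word \<Rightarrow> word" where
  "plus_word (Word xs) (Word ys) = Word (xs @ ys)"
instance
proof
  fix a b c :: word
  show "a + b + c = a + (b + c)" by (cases a; cases b; cases c) auto
  show "0 + a = a" by (cases a) (auto simp: zero_word_def)
  show "a + 0 = a" by (cases a) (auto simp: zero_word_def)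
qed
end

(* noncommutative polynomials: finitely supported Q(q)-combinations of words,
   multiplication = concatenation, extended bilinearly *)
type_synonym falg = "word \<Rightarrow>\<^sub>0 qf"

definition gen_el :: "gen \<Rightarrow> falg" where "gen_el g = Poly_Mapping.single (Word [g]) 1"

abbreviation "E \<equiv> gen_el GE"
abbreviation "F \<equiv> gen_el GF"
abbreviation "K \<equiv> gen_el GK"
abbreviation "Ki \<equiv> gen_el GKi"

definition scal :: "qf \<Rightarrow> falg \<Rightarrow> falg" where
  "scal c x = Poly_Mapping.single 0 c * x"

definition rels :: "falg set" where
  "rels = { K * Ki - 1, Ki * K - 1,
            K * E * Ki - scal (qq ^ 2) E,
            K * F * Ki - scal (inverse (qq ^ 2)) F,
            E * F - F * E - scal (inverse (qq - inverse qq)) (K - Ki) }"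

inductive_set relideal :: "falg set" where
  zero: "0 \<in> relideal"
| gen: "r \<in> rels \<Longrightarrow> a * r * b \<in> relideal"
| add: "x \<in> relideal \<Longrightarrow> y \<in> relideal \<Longrightarrow> x + y \<in> relideal"

text \<open>U_q(sl_2) is falg modulo relideal; x and y represent the same element of
  U_q(sl_2) iff x - y is in relideal.\<close>

definition Kbr :: "int \<Rightarrow> falg" where
  "Kbr a = scal (inverse (qq - inverse qq)) (scal (qq powi a) K - scal (qq powi (-a)) Ki)"

definition Kbin :: "int \<Rightarrow> nat \<Rightarrow> falg" where
  "Kbin c t = scal (inverse (qfact t)) (prod_list (map (\<lambda>i. Kbr (c - int i)) [0..<t]))"

definition Ediv :: "nat \<Rightarrow> falg" where "Ediv n = scal (inverse (qfact n)) (E ^ n)"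
definition Fdiv :: "nat \<Rightarrow> falg" where "Fdiv n = scal (inverse (qfact n)) (F ^ n)"

inductive_set Asubalg :: "falg set \<Rightarrow> falg set" for G where
  one: "1 \<in> Asubalg G"
| gen: "g \<in> G \<Longrightarrow> g \<in> Asubalg G"
| add: "x \<in> Asubalg G \<Longrightarrow> y \<in> Asubalg G \<Longrightarrow> x + y \<in> Asubalg G"
| mult: "x \<in> Asubalg G \<Longrightarrow> y \<in> Asubalg G \<Longrightarrow> x * y \<in> Asubalg G"
| smult: "a \<in> Laurent \<Longrightarrow> x \<in> Asubalg G \<Longrightarrow> scal a x \<in> Asubalg G"

definition in_Asubalg :: "falg set \<Rightarrow> falg \<Rightarrow> bool" where
  "in_Asubalg G x \<longleftrightarrow> (\<exists>y\<in>Asubalg G. x - y \<in> relideal)"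

definition is_A_basis :: "(falg \<Rightarrow> bool) \<Rightarrow> 'i set \<Rightarrow> ('i \<Rightarrow> falg) \<Rightarrow> bool" where
  "is_A_basis M J b \<longleftrightarrow>
     (\<forall>j\<in>J. M (b j)) \<and>
     (\<forall>S c. finite S \<longrightarrow> S \<subseteq> J \<longrightarrow> (\<forall>j\<in>S. c j \<in> Laurent) \<longrightarrow>
        (\<Sum>j\<in>S. scal (c j) (b j)) \<in> relideal \<longrightarrow> (\<forall>j\<in>S. c j = 0)) \<and>
     (\<forall>x. M x \<longrightarrow> (\<exists>S c. finite S \<and> S \<subseteq> J \<and> (\<forall>j\<in>S. c j \<in> Laurent) \<and>
        x - (\<Sum>j\<in>S. scal (c j) (b j)) \<in> relideal))"

definition U0A_gens :: "falg set" where
  "U0A_gens = {K, Ki} \<union> range (Kbin 0)"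

definition UA_gens :: "falg set" where
  "UA_gens = range Ediv \<union> range Fdiv \<union> {K, Ki} \<union> range (Kbin 0)"

end

theory Submission
  imports Defs
begin

text \<open>
  The Cartan part is modelled by Laurent polynomials f(K) with coefficients in Q(q), mapped into
  U_q(sl_2) by a map that is multiplicative modulo the relations. Spanning: the A-span of the
  elements [K;0,t] and [K;1,t] is a ring containing K and K^-1 and all [K;c,t], because [K;c,t]
  satisfies a three-term recurrence in c. Together with K E = q^2 E K and the commutation formula
  E^(n) F^(a) = \<Sum> j. F^(a-j) [K;2j-n-a,j] E^(n-j), this shows that left multiplication by each
  generator preserves the A-span of the elements F^(a) [K;c,t] E^(b).
  Independence holds even over Q(q): acting on 1 in the left regular representation, written in
  the coordinates of the monomials F^a K^n E^b, turns a relation among the F^(a) [K;c,t] E^(b) into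
  relations among the Laurent polynomials [K;c,t] for fixed a and b. Among these, only [K;0,t] and
  [K;1,t] reach the degrees t and -t, with coefficient ratios q^t and q^-t there, so induction on
  the largest t shows that all coefficients vanish.
\<close>

abbreviation "lookup \<equiv> Poly_Mapping.lookup"
abbreviation "keys \<equiv> Poly_Mapping.keys"
abbreviation "single \<equiv> Poly_Mapping.single"

section \<open>The ring A = Z[q, q^-1] and q-integers\<close>

definition int_coeffs :: "rat poly \<Rightarrow> bool" where
  "int_coeffs p \<longleftrightarrow> (\<forall>i. coeff p i \<in> \<int>)"

lemma int_coeffs_of_int_poly: "int_coeffs (map_poly of_int p)"
  unfolding int_coeffs_def by (simp add: coeff_map_poly)

lemma int_coeffs_imp_of_int_poly: assumes "int_coeffs r" shows "\<exists>p. r = map_poly of_int p"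
proof -
  have "r = map_poly of_int (map_poly floor r)"
    by (rule poly_eqI) (use assms in \<open>auto simp: int_coeffs_def coeff_map_poly elim!: Ints_cases\<close>)
  then show ?thesis by blast
qed

lemma int_coeffs_add: "int_coeffs p \<Longrightarrow> int_coeffs q \<Longrightarrow> int_coeffs (p + q)"
  unfolding int_coeffs_def by (simp add: Ints_add)

lemma int_coeffs_minus: "int_coeffs p \<Longrightarrow> int_coeffs (- p)"
  unfolding int_coeffs_def by (simp add: Ints_minus)

lemma int_coeffs_mult: "int_coeffs p \<Longrightarrow> int_coeffs q \<Longrightarrow> int_coeffs (p * q)"
  unfolding int_coeffs_def coeff_mult by (auto intro!: Ints_sum Ints_mult)

lemma int_coeffs_const: "int_coeffs [:of_int z:]"
  unfolding int_coeffs_def by (simp add: coeff_pCons split: nat.split)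

lemma int_coeffs_X: "int_coeffs [:0, 1:]"
  unfolding int_coeffs_def by (simp add: coeff_pCons split: nat.split)

lemma int_coeffs_power: "int_coeffs p \<Longrightarrow> int_coeffs (p ^ n)"
proof (induction n)
  case 0 show ?case by (simp add: int_coeffs_def coeff_1)
next
  case (Suc n) then show ?case by (simp add: int_coeffs_mult)
qed

lemma Laurent_iff: "x \<in> Laurent \<longleftrightarrow> (\<exists>r n. int_coeffs r \<and> x = Fraction_Field.Fract r 1 * qq powi n)"
  unfolding Laurent_def using int_coeffs_imp_of_int_poly int_coeffs_of_int_poly by blast

lemma qq_power_Fract: "qq ^ n = Fraction_Field.Fract ([:0,1:] ^ n) 1"
  by (induction n) (auto simp: qq_def One_fract_def)

lemma qq_nz [simp]: "qq \<noteq> 0"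
  by (simp add: qq_def Zero_fract_def eq_fract)

lemma qq_power_neq1: assumes "n > 0" shows "qq ^ n \<noteq> 1"
proof
  assume "qq ^ n = 1"
  then have "([:0,1:] :: rat poly) ^ n = 1"
    by (simp add: qq_power_Fract One_fract_def eq_fract)
  then have "degree (([:0,1:] :: rat poly) ^ n) = 0" by simp
  moreover have "degree (([:0,1:] :: rat poly) ^ n) = n"
    by (simp add: degree_power_eq)
  ultimately show False using assms by simp
qed

lemma qq_powi_eq1: "qq powi n = 1 \<longleftrightarrow> n = 0"
proof
  assume h: "qq powi n = 1"
  show "n = 0"
  proof (cases "n \<ge> 0")
    case True
    then obtain k where "n = int k" by (metis nonneg_eq_int)
    with h qq_power_neq1[of k] show ?thesis by (cases "k = 0") auto
  next
    case False
    then obtain k where k: "n = - int k" "k > 0"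
      by (metis add.inverse_inverse neg_0_less_iff_less not_le of_nat_0_less_iff zero_less_imp_eq_int)
    with h have "inverse (qq ^ k) = 1" by (simp add: power_int_minus)
    then have "qq ^ k = 1" by (metis inverse_1 inverse_inverse_eq)
    with qq_power_neq1[OF k(2)] show ?thesis by simp
  qed
qed simp

abbreviation qpow :: "int \<Rightarrow> qf" where "qpow n \<equiv> qq powi n"

lemma qpow_add: "qpow (a + b) = qpow a * qpow b" by (simp add: power_int_add)
lemma qpow_diff: "qpow (a - b) = qpow a / qpow b" by (simp add: power_int_diff)
lemma qpow_minus: "qpow (- a) = inverse (qpow a)" by (simp add: power_int_minus)

lemma qpow_inj: "qpow a = qpow b \<longleftrightarrow> a = b"
proof
  assume "qpow a = qpow b"
  then have "qpow (a - b) = 1" by (simp add: qpow_diff)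
  then show "a = b" using qq_powi_eq1 by simp
qed simp

definition qdiff :: qf where "qdiff = qq - inverse qq"

lemma qdiff_nz [simp]: "qdiff \<noteq> 0"
proof
  assume "qdiff = 0"
  then have "qq = inverse qq" by (simp add: qdiff_def)
  then have "qq * qq = 1" by (metis qq_nz right_inverse)
  then have "qq ^ 2 = 1" by (simp add: power2_eq_square)
  then show False using qq_power_neq1[of 2] by simp
qed

lemma qdiff_qpow: "qdiff = qpow 1 - qpow (-1)" by (simp add: qdiff_def power_int_minus)

lemma qint_qpow: "qint n = (qpow n - qpow (- n)) / qdiff"
  by (simp add: qint_def qdiff_def)

lemma qq_neq_inv [simp]: "qq \<noteq> inverse qq" using qdiff_nz unfolding qdiff_def by simp
lemma qint_0 [simp]: "qint 0 = 0" by (simp add: qint_def)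
lemma qint_1 [simp]: "qint 1 = 1" by (simp add: qint_qpow qdiff_qpow)

lemma qint_add: "qint (a + b) = qpow (- b) * qint a + qpow a * qint b"
  by (simp add: qint_qpow qpow_add qpow_diff qpow_minus field_simps)

lemma qint_nz: "n \<noteq> 0 \<Longrightarrow> qint n \<noteq> 0"
proof
  assume "n \<noteq> 0" "qint n = 0"
  then have "qpow n = qpow (- n)" by (simp add: qint_qpow)
  then show False using \<open>n \<noteq> 0\<close> qpow_inj by simp
qed

lemma Laurent_mult: assumes "x \<in> Laurent" "y \<in> Laurent" shows "x * y \<in> Laurent"
proof -
  from assms obtain r n s m where "int_coeffs r" "x = Fraction_Field.Fract r 1 * qpow n" "int_coeffs s" "y = Fraction_Field.Fract s 1 * qpow m"
    unfolding Laurent_iff by blast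
  then have "x * y = Fraction_Field.Fract (r * s) 1 * qpow (n + m)" "int_coeffs (r * s)"
    by (simp_all add: qpow_add int_coeffs_mult mult_ac)
  then show ?thesis unfolding Laurent_iff by blast
qed

lemma Laurent_add_shifted:
  assumes "int_coeffs r" "int_coeffs s" "n \<le> m"
  shows "Fraction_Field.Fract r 1 * qpow n + Fraction_Field.Fract s 1 * qpow m \<in> Laurent"
proof -
  obtain k where k: "m = n + int k" using assms(3) by (intro that[of "nat (m - n)"]) simp
  have eq1: "Fraction_Field.Fract s 1 * qpow m = Fraction_Field.Fract (s * [:0,1:]^k) 1 * qpow n"
    by (simp add: k qpow_add qq_power_Fract mult_ac)
  have eq2: "Fraction_Field.Fract (r + s * [:0,1:]^k) 1 = Fraction_Field.Fract r 1 + Fraction_Field.Fract (s * [:0,1:]^k) 1"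
    by simp
  have "Fraction_Field.Fract r 1 * qpow n + Fraction_Field.Fract s 1 * qpow m = Fraction_Field.Fract (r + s * [:0,1:]^k) 1 * qpow n"
    unfolding eq1 eq2 by (simp only: distrib_right)
  moreover have "int_coeffs (r + s * [:0,1:]^k)"
    using assms by (intro int_coeffs_add int_coeffs_mult int_coeffs_power int_coeffs_X)
  ultimately show ?thesis unfolding Laurent_iff by blast
qed

lemma Laurent_add: assumes "x \<in> Laurent" "y \<in> Laurent" shows "x + y \<in> Laurent"
proof -
  from assms obtain r n s m where "int_coeffs r" "x = Fraction_Field.Fract r 1 * qpow n" "int_coeffs s" "y = Fraction_Field.Fract s 1 * qpow m"
    unfolding Laurent_iff by blast
  then show ?thesis using Laurent_add_shifted[of r s n m] Laurent_add_shifted[of s r m n]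
    by (cases "n \<le> m") (auto simp: add.commute)
qed

lemma Laurent_uminus: assumes "x \<in> Laurent" shows "- x \<in> Laurent"
proof -
  from assms obtain r n where "int_coeffs r" "x = Fraction_Field.Fract r 1 * qpow n"
    unfolding Laurent_iff by blast
  then have "- x = Fraction_Field.Fract (- r) 1 * qpow n" "int_coeffs (- r)" by (simp_all add: int_coeffs_minus minus_fract[symmetric] del: minus_fract)
  then show ?thesis unfolding Laurent_iff by blast
qed

lemma Laurent_diff: "x \<in> Laurent \<Longrightarrow> y \<in> Laurent \<Longrightarrow> x - y \<in> Laurent"
  using Laurent_add[of x "- y"] Laurent_uminus[of y] by simp

lemma Laurent_qpow: "qpow n \<in> Laurent"
proof -
  have "qpow n = Fraction_Field.Fract [:of_int 1:] 1 * qpow n" by (simp add: One_fract_def[symmetric] one_pCons[symmetric])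
  then show ?thesis unfolding Laurent_iff using int_coeffs_const by blast
qed

lemma Laurent_one: "1 \<in> Laurent" using Laurent_qpow[of 0] by simp

lemma Laurent_zero: "0 \<in> Laurent"
  using Laurent_diff[OF Laurent_one Laurent_one] by simp

lemma Laurent_inv_qq [simp]: "inverse qq \<in> Laurent" using Laurent_qpow[of "-1"] by (simp add: power_int_minus)
lemma Laurent_qq_pow [simp]: "qq ^ n \<in> Laurent" using Laurent_qpow[of "int n"] by simp

lemma qfact_0 [simp]: "qfact 0 = 1" by (simp add: qfact_def)
lemma qfact_Suc: "qfact (Suc n) = qfact n * qint (int (Suc n))"
  by (simp add: qfact_def prod.nat_ivl_Suc' mult.commute)

lemma qfact_nz [simp]: "qfact n \<noteq> 0"
  by (induction n) (auto simp: qfact_Suc qint_nz)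

definition qbin :: "nat \<Rightarrow> nat \<Rightarrow> qf" where
  "qbin n k = qfact n / (qfact k * qfact (n - k))"

lemma qbin_pascal:
  assumes "1 \<le> k" "k \<le> n"
  shows "qbin (Suc n) k = qpow (- int (Suc n - k)) * qbin n (k - 1) + qpow (int k) * qbin n k"
proof -
  obtain k' where k': "k = Suc k'" using assms by (cases k) auto
  obtain m where m: "n = k + m" using assms by (metis le_iff_add)
  have e: "int (Suc n) = int k + int (Suc m)" using m by simp
  have split: "qint (int (Suc n)) = qpow (- int (Suc m)) * qint (int k) + qpow (int k) * qint (int (Suc m))"
    unfolding e by (rule qint_add)
  have e1: "Suc n - k = Suc m" "n - k = m" "n - (k - 1) = Suc m" using m k' by auto
  show ?thesis
    unfolding qbin_def e1 using split
    by (simp add: qfact_Suc k' m field_simps qint_nz del: of_nat_Suc)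
qed

lemma Laurent_qbin: "k \<le> n \<Longrightarrow> qbin n k \<in> Laurent"
proof (induction n arbitrary: k)
  case 0 then show ?case by (simp add: qbin_def Laurent_one)
next
  case (Suc n)
  show ?case
  proof (cases "k = 0 \<or> k = Suc n")
    case True then show ?thesis by (auto simp: qbin_def Laurent_one)
  next
    case False
    then have "1 \<le> k" "k \<le> n" using Suc.prems by auto
    then show ?thesis using Suc.IH[of "k - 1"] Suc.IH[of k]
      by (simp only: qbin_pascal) (intro Laurent_add Laurent_mult Laurent_qpow; simp)
  qed
qed

lemma Laurent_qfact_ratio: "qfact (a + b) / (qfact a * qfact b) \<in> Laurent"
  using Laurent_qbin[of a "a + b"] by (simp add: qbin_def)

section \<open>The free algebra modulo the defining relations\<close>

lemma poly_mapping_sum_single: "(f :: 'a \<Rightarrow>\<^sub>0 'b::comm_monoid_add) = (\<Sum>k\<in>keys f. single k (lookup f k))"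
proof (rule poly_mapping_eqI)
  fix w
  have "lookup (\<Sum>k\<in>keys f. single k (lookup f k)) w = (\<Sum>k\<in>keys f. if k = w then lookup f k else 0)"
    by (simp only: Poly_Mapping.lookup_sum Poly_Mapping.lookup_single when_def)
  also have "\<dots> = lookup f w"
    by (simp add: sum.delta' in_keys_iff)
  finally show "lookup f w = lookup (\<Sum>k\<in>keys f. single k (lookup f k)) w" by simp
qed

lemma poly_mapping_induct [case_names zero single]:
  fixes f :: "'a \<Rightarrow>\<^sub>0 'b::comm_monoid_add"
  assumes "P 0" "\<And>k c g. P g \<Longrightarrow> P (single k c + g)"
  shows "P f"
proof -
  have "P (\<Sum>k\<in>S. single k (lookup f k))" if "finite S" for S
    using that by (induction S rule: finite_induct) (auto intro: assms)
  then show ?thesis using poly_mapping_sum_single[of f] by (metis finite_keys)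
qed

lemma single_0_commute: "single 0 c * (x :: falg) = x * single 0 c"
proof (induction x rule: poly_mapping_induct)
  case zero then show ?case by simp
next
  case (single k d g)
  have "single 0 c * single k d = single k d * (single 0 c :: falg)"
    by (simp add: mult_single mult.commute)
  then show ?case using single by (simp add: distrib_left distrib_right)
qed

lemma scal_mult_left: "scal c x * y = scal c (x * y)"
  by (simp add: scal_def mult.assoc)

lemma scal_mult_right: "x * scal c y = scal c (x * y)"
  by (simp only: scal_def mult.assoc[symmetric] single_0_commute[of c x, symmetric])

lemma scal_scal: "scal c (scal d x) = scal (c * d) x"
  by (simp add: scal_def mult.assoc[symmetric] mult_single)

lemma scal_add_right: "scal c (x + y) = scal c x + scal c y"
  by (simp add: scal_def distrib_left)

lemma scal_add_left: "scal (c + d) x = scal c x + scal d x"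
  by (simp add: scal_def single_add distrib_right)

lemma scal_one [simp]: "scal 1 x = x"
  by (simp add: scal_def)

lemma scal_zero_left [simp]: "scal 0 x = 0"
  by (simp add: scal_def)

lemma scal_minus_left: "scal (- c) x = - scal c x"
  by (simp add: scal_def single_uminus)

lemma scal_diff_right: "scal c (x - y) = scal c x - scal c y"
  by (simp add: scal_def right_diff_distrib)

lemma scal_sum_right: "scal c (sum f S) = (\<Sum>i\<in>S. scal c (f i))"
  by (simp add: scal_def sum_distrib_left)

lemma relideal_mult_left: "x \<in> relideal \<Longrightarrow> c * x \<in> relideal"
proof (induction rule: relideal.induct)
  case zero then show ?case by (simp add: relideal.zero)
next
  case (gen r a b) then show ?case using relideal.gen[of r "c * a" b] by (simp add: mult.assoc)
next
  case (add x y) then show ?case by (simp add: distrib_left relideal.add)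
qed

lemma relideal_mult_right: "x \<in> relideal \<Longrightarrow> x * c \<in> relideal"
proof (induction rule: relideal.induct)
  case zero then show ?case by (simp add: relideal.zero)
next
  case (gen r a b) then show ?case using relideal.gen[of r a "b * c"] by (simp add: mult.assoc)
next
  case (add x y) then show ?case by (simp add: distrib_right relideal.add)
qed

lemma relideal_scal: "x \<in> relideal \<Longrightarrow> scal c x \<in> relideal"
  unfolding scal_def by (rule relideal_mult_left)

lemma relideal_uminus: "x \<in> relideal \<Longrightarrow> - x \<in> relideal"
  using relideal_scal[of x "-1"] by (simp add: scal_minus_left)

lemma rels_in_relideal: "r \<in> rels \<Longrightarrow> r \<in> relideal"
  using relideal.gen[of r 1 1] by simp

definition ueq :: "falg \<Rightarrow> falg \<Rightarrow> bool" (infix "\<doteq>" 50) where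
  "x \<doteq> y \<longleftrightarrow> x - y \<in> relideal"

lemma ueq_refl [simp]: "x \<doteq> x" by (simp add: ueq_def relideal.zero)

lemma ueq_sym: "x \<doteq> y \<Longrightarrow> y \<doteq> x"
  unfolding ueq_def using relideal_uminus by fastforce

lemma ueq_trans [trans]: "x \<doteq> y \<Longrightarrow> y \<doteq> z \<Longrightarrow> x \<doteq> z"
  unfolding ueq_def using relideal.add by fastforce

lemma ueq_add: "a \<doteq> b \<Longrightarrow> c \<doteq> d \<Longrightarrow> a + c \<doteq> b + d"
  unfolding ueq_def using relideal.add by (fastforce simp: algebra_simps)

lemma ueq_mult_left: "a \<doteq> b \<Longrightarrow> c * a \<doteq> c * b"
  unfolding ueq_def using relideal_mult_left by (fastforce simp: right_diff_distrib[symmetric])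

lemma ueq_mult_right: "a \<doteq> b \<Longrightarrow> a * c \<doteq> b * c"
  unfolding ueq_def using relideal_mult_right by (fastforce simp: left_diff_distrib[symmetric])

lemma ueq_mult: "a \<doteq> b \<Longrightarrow> c \<doteq> d \<Longrightarrow> a * c \<doteq> b * d"
  using ueq_mult_left ueq_mult_right ueq_trans by blast

lemma ueq_scal: "a \<doteq> b \<Longrightarrow> scal c a \<doteq> scal c b"
  unfolding ueq_def using relideal_scal by (fastforce simp: scal_diff_right[symmetric])

lemma ueq_sum: "(\<And>i. i \<in> S \<Longrightarrow> f i \<doteq> g i) \<Longrightarrow> sum f S \<doteq> sum g S"
  by (induction S rule: infinite_finite_induct) (auto intro: ueq_add)

lemma K_Kinv: "K * Ki \<doteq> 1"
  unfolding ueq_def by (rule rels_in_relideal) (simp add: rels_def)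

lemma Kinv_K: "Ki * K \<doteq> 1"
  unfolding ueq_def by (rule rels_in_relideal) (simp add: rels_def)

lemma K_E_Kinv: "K * E * Ki \<doteq> scal (qpow 2) E"
  unfolding ueq_def by (rule rels_in_relideal) (simp add: rels_def)

lemma K_F_Kinv: "K * F * Ki \<doteq> scal (qpow (-2)) F"
  unfolding ueq_def by (rule rels_in_relideal) (simp add: rels_def power_int_minus)

lemma E_F_commutator: "E * F \<doteq> F * E + scal (inverse qdiff) (K - Ki)"
  unfolding ueq_def by (rule rels_in_relideal) (simp add: rels_def qdiff_def algebra_simps)

lemma K_commute_of_conj:
  assumes "K * X * Ki \<doteq> scal a X"
  shows "K * X \<doteq> scal a (X * K)"
proof -
  have "K * X \<doteq> K * X * (Ki * K)" using ueq_mult_left[OF ueq_sym[OF Kinv_K], of "K * X"] by simp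
  also have "K * X * (Ki * K) = (K * X * Ki) * K" by (simp add: mult.assoc)
  also have "\<dots> \<doteq> scal a X * K" by (rule ueq_mult_right[OF assms])
  finally show ?thesis by (simp add: scal_mult_left)
qed

lemma Kinv_commute_of_K_commute:
  assumes "K * X \<doteq> scal a (X * K)" "a \<noteq> 0"
  shows "Ki * X \<doteq> scal (inverse a) (X * Ki)"
proof -
  have "Ki * (K * X) * Ki \<doteq> Ki * scal a (X * K) * Ki"
    by (intro ueq_mult_right ueq_mult_left assms(1))
  moreover have "Ki * (K * X) * Ki \<doteq> X * Ki"
    using ueq_mult_right[OF Kinv_K, of "X * Ki"] by (simp add: mult.assoc)
  moreover have "Ki * scal a (X * K) * Ki \<doteq> scal a (Ki * X)"
    using ueq_scal[OF ueq_mult_left[OF K_Kinv, of "Ki * X"], of a]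
    by (simp add: scal_mult_left scal_mult_right mult.assoc)
  ultimately have "X * Ki \<doteq> scal a (Ki * X)"
    using ueq_sym ueq_trans by blast
  then have "scal (inverse a) (X * Ki) \<doteq> scal (inverse a * a) (Ki * X)"
    using ueq_scal scal_scal by metis
  then show ?thesis using assms(2) ueq_sym by simp
qed

lemma K_F: "K * F \<doteq> scal (qpow (-2)) (F * K)"
  by (rule K_commute_of_conj[OF K_F_Kinv])

lemma K_E: "K * E \<doteq> scal (qpow 2) (E * K)"
  by (rule K_commute_of_conj[OF K_E_Kinv])

section \<open>Laurent polynomials in K\<close>

text \<open>Laurent polynomials f(K) as finitely supported maps Z \<rightarrow> Q(q); lKbr c and lKbin c t are the
  analogues of [K;c] and [K;c,t].\<close>

type_synonym lpoly = "int \<Rightarrow>\<^sub>0 qf"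

definition lconst :: "qf \<Rightarrow> lpoly" where "lconst c = single 0 c"

abbreviation lK :: lpoly where "lK \<equiv> single 1 1"
abbreviation lKinv :: lpoly where "lKinv \<equiv> single (-1) 1"

definition lKbr :: "int \<Rightarrow> lpoly" where
  "lKbr c = single 1 (qpow c / qdiff) - single (-1) (qpow (- c) / qdiff)"

definition lKbin :: "int \<Rightarrow> nat \<Rightarrow> lpoly" where
  "lKbin c t = lconst (inverse (qfact t)) * (\<Prod>i<t. lKbr (c - int i))"

lemma lookup_lconst_mult [simp]: "lookup (lconst a * f) n = a * lookup f n"
proof (induction f rule: poly_mapping_induct)
  case zero then show ?case by simp
next
  case (single k c g)
  then show ?case by (simp add: lconst_def distrib_left mult_single lookup_add lookup_single when_def algebra_simps)
qed

lemma lookup_mult_single: "lookup ((f::lpoly) * single k c) n = lookup f (n - k) * c"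
proof (induction f rule: poly_mapping_induct)
  case zero then show ?case by simp
next
  case (single m d g)
  then show ?case by (auto simp: distrib_right mult_single lookup_add lookup_single when_def algebra_simps)
qed

lemma lookup_single_if: "lookup (single k c) n = (if k = n then c else 0)"
  by (simp add: Poly_Mapping.lookup_single when_def)

lemma lconst_mult: "lconst a * lconst b = lconst (a * b)" by (simp add: lconst_def mult_single)
lemma lconst_uminus: "lconst (- a) = - lconst a" by (simp add: lconst_def single_uminus)
lemma lconst_1 [simp]: "lconst 1 = 1" by (simp add: lconst_def)
lemma lookup_lKbr: "lookup (lKbr c) n = (if n = 1 then qpow c / qdiff else if n = -1 then - (qpow (- c) / qdiff) else 0)"
  by (auto simp: lKbr_def lookup_minus lookup_single_if)

lemma lookup_lK: "lookup lK n = (if n = 1 then 1 else 0)" by (simp add: lookup_single_if)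
lemma lookup_lKinv: "lookup lKinv n = (if n = -1 then 1 else 0)" by (simp add: lookup_single_if)

lemma lKbin_0 [simp]: "lKbin c 0 = 1" by (simp add: lKbin_def)

lemma lKbin_Suc_right: "lconst (qint (int (Suc t))) * lKbin c (Suc t) = lKbin c t * lKbr (c - int t)"
proof -
  have "lconst (qint (int (Suc t))) * lKbin c (Suc t)
      = lconst (qint (int (Suc t)) * inverse (qfact (Suc t))) * ((\<Prod>i<t. lKbr (c - int i)) * lKbr (c - int t))"
    by (simp add: lKbin_def lconst_mult[symmetric] mult.assoc)
  also have "qint (int (Suc t)) * inverse (qfact (Suc t)) = inverse (qfact t)"
    using qint_nz[of "int (Suc t)"] by (simp add: qfact_Suc del: of_nat_Suc)
  finally show ?thesis by (simp add: lKbin_def mult.assoc)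
qed

lemma lKbin_Suc_left: "lconst (qint (int (Suc t))) * lKbin c (Suc t) = lKbr c * lKbin (c - 1) t"
proof -
  have p: "(\<Prod>i<Suc t. lKbr (c - int i)) = lKbr c * (\<Prod>i<t. lKbr (c - 1 - int i))"
    unfolding prod.lessThan_Suc_shift by (simp add: algebra_simps)
  have "lconst (qint (int (Suc t))) * lKbin c (Suc t)
      = lconst (qint (int (Suc t)) * inverse (qfact (Suc t))) * (lKbr c * (\<Prod>i<t. lKbr (c - 1 - int i)))"
    unfolding lKbin_def p by (simp only: lconst_mult[symmetric] mult.assoc)
  also have "qint (int (Suc t)) * inverse (qfact (Suc t)) = inverse (qfact t)"
    using qint_nz[of "int (Suc t)"] by (simp add: qfact_Suc del: of_nat_Suc)
  finally show ?thesis by (simp add: lKbin_def mult_ac)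
qed

lemma qint_add_lKbr: "lconst (qint (u + v)) * lKbr w = lconst (qint u) * lKbr (w - v) + lconst (qint v) * lKbr (w + u)"
proof (rule poly_mapping_eqI)
  fix n
  have "qint (u + v) * (qpow w / qdiff) = qint u * (qpow (w - v) / qdiff) + qint v * (qpow (w + u) / qdiff)"
    "qint (u + v) * (qpow (- w) / qdiff) = qint u * (qpow (- (w - v)) / qdiff) + qint v * (qpow (- (w + u)) / qdiff)"
    by (simp_all add: qint_qpow qpow_add qpow_diff qpow_minus field_simps)
  then show "lookup (lconst (qint (u + v)) * lKbr w) n = lookup (lconst (qint u) * lKbr (w - v) + lconst (qint v) * lKbr (w + u)) n"
    by (auto simp: lookup_add lookup_lKbr)
qed

lemma lKbr_diff_lKinv: "lKbr a - lconst (qpow (a - b)) * lKbr b = lconst (qpow (- b) * qint (a - b)) * lKinv"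
proof (rule poly_mapping_eqI)
  fix n
  have e1: "qpow a / qdiff - qpow (a - b) * (qpow b / qdiff) = 0" by (simp add: qpow_diff)
  have e2: "- (qpow (- a) / qdiff) + qpow (a - b) * (qpow (- b) / qdiff) = qpow (- b) * qint (a - b)"
    by (simp add: qint_qpow qpow_add qpow_diff qpow_minus field_simps)
  show "lookup (lKbr a - lconst (qpow (a - b)) * lKbr b) n = lookup (lconst (qpow (- b) * qint (a - b)) * lKinv) n"
    using e1 e2 by (simp add: lookup_minus lookup_lKbr lookup_lKinv)
qed

lemma lKbr_diff_lK: "lKbr a - lconst (qpow (b - a)) * lKbr b = lconst (qpow b * qint (a - b)) * lK"
proof (rule poly_mapping_eqI)
  fix n
  have e1: "qpow a / qdiff - qpow (b - a) * (qpow b / qdiff) = qpow b * qint (a - b)"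
    by (simp add: qint_qpow qpow_add qpow_diff qpow_minus field_simps)
  have e2: "- (qpow (- a) / qdiff) + qpow (b - a) * (qpow (- b) / qdiff) = 0" by (simp add: qpow_diff qpow_minus field_simps)
  show "lookup (lKbr a - lconst (qpow (b - a)) * lKbr b) n = lookup (lconst (qpow b * qint (a - b)) * lK) n"
    using e1 e2 by (simp add: lookup_minus lookup_lKbr lookup_lK)
qed

lemma lKbr_recurrence: "lKbr (c + 2) = lconst (qpow 1 + qpow (-1)) * lKbr (c + 1) - lKbr c"
proof (rule poly_mapping_eqI)
  fix n
  have e1: "qpow (c + 2) / qdiff = (qpow 1 + qpow (-1)) * (qpow (c + 1) / qdiff) - qpow c / qdiff"
    by (simp add: qpow_add qpow_minus field_simps power2_eq_square)
  have e2: "qpow (- (c + 2)) / qdiff = (qpow 1 + qpow (-1)) * (qpow (- (c + 1)) / qdiff) - qpow (- c) / qdiff"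
    by (simp add: qpow_add qpow_diff qpow_minus field_simps power2_eq_square)
  show "lookup (lKbr (c + 2)) n = lookup (lconst (qpow 1 + qpow (-1)) * lKbr (c + 1) - lKbr c) n"
    using e1 e2 by (simp add: lookup_minus lookup_lKbr add_divide_distrib)
qed

lemma lKbr_mult: "lKbr a * lKbr b = single 2 (qpow (a + b) / qdiff^2)
   + single 0 (- (qpow (a - b) + qpow (b - a)) / qdiff^2) + single (-2) (qpow (- a - b) / qdiff^2)"
proof -
  have "lKbr a * lKbr b = single 2 (qpow a / qdiff * (qpow b / qdiff))
     - single 0 (qpow a / qdiff * (qpow (- b) / qdiff)) - single 0 (qpow (- a) / qdiff * (qpow b / qdiff))
     + single (-2) (qpow (- a) / qdiff * (qpow (- b) / qdiff))"
    by (simp add: lKbr_def algebra_simps mult_single)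
  also have "\<dots> = single 2 (qpow (a + b) / qdiff^2)
   + single 0 (- (qpow (a - b) + qpow (b - a)) / qdiff^2) + single (-2) (qpow (- a - b) / qdiff^2)"
    by (simp add: single_diff[symmetric] single_add[symmetric] qpow_add qpow_diff qpow_minus field_simps power2_eq_square)
  finally show ?thesis .
qed

lemma lconst_nonzero: "a \<noteq> 0 \<Longrightarrow> lconst a \<noteq> 0"
  unfolding lconst_def by (metis lookup_single_eq lookup_zero)

lemma lookup_lconst: "lookup (lconst a) n = (if n = 0 then a else 0)"
  by (simp add: lconst_def lookup_single_if)

lemma qpow_double: "qpow (2 * x) = qpow x * qpow x" "qpow (x * 2) = qpow x * qpow x"
  by (simp_all only: mult_2 mult_2_right qpow_add)

lemma lconst_cancel: "a \<noteq> 0 \<Longrightarrow> lconst a * x = lconst a * y \<Longrightarrow> x = y"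
  using lconst_nonzero[of a] by simp

lemma lKbr_quadratic: "lKbr (c + 2) * lKbr (c + 1) - lconst (qpow (s + 2) + qpow (- (s + 2))) * (lKbr (c + 1) * lKbr (c - s))
   + lKbr (c - s) * lKbr (c - s - 1) = lconst (qint (s + 2) * qint (s + 1))"
proof (rule poly_mapping_eqI)
  fix n
  let ?r = "qpow (s + 2) + qpow (- (s + 2))"
  have "qpow (c + 2 + (c + 1)) / qdiff^2 - ?r * (qpow (c + 1 + (c - s)) / qdiff^2)
      + qpow (c - s + (c - s - 1)) / qdiff^2 = 0"
    "qpow (- (c + 2) - (c + 1)) / qdiff^2 - ?r * (qpow (- (c + 1) - (c - s)) / qdiff^2)
      + qpow (- (c - s) - (c - s - 1)) / qdiff^2 = 0"
    "- (qpow (c + 2 - (c + 1)) + qpow (c + 1 - (c + 2))) / qdiff^2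
      - ?r * (- (qpow (c + 1 - (c - s)) + qpow (c - s - (c + 1))) / qdiff^2)
      + - (qpow (c - s - (c - s - 1)) + qpow (c - s - 1 - (c - s))) / qdiff^2 = qint (s + 2) * qint (s + 1)"
    by (simp_all add: qint_qpow qpow_add qpow_diff qpow_minus qpow_double field_simps power2_eq_square power3_eq_cube)
  then show "lookup (lKbr (c + 2) * lKbr (c + 1) - lconst ?r * (lKbr (c + 1) * lKbr (c - s))
      + lKbr (c - s) * lKbr (c - s - 1)) n = lookup (lconst (qint (s + 2) * qint (s + 1))) n"
    unfolding lKbr_mult
    by (simp only: lookup_add lookup_minus lookup_lconst_mult lookup_single_if lookup_lconst) auto
qed

lemma lKbr_prod_Suc_Suc_first: "(\<Prod>i<Suc (Suc s). lKbr (c + 2 - int i)) = lKbr (c + 2) * lKbr (c + 1) * (\<Prod>i<s. lKbr (c - int i))"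
  unfolding prod.lessThan_Suc_shift by (simp add: algebra_simps)

lemma prod_lessThan_Suc_Suc_middle: "(\<Prod>i<Suc (Suc s). g i) = g 0 * (\<Prod>i<s. g (Suc i)) * (g (Suc s) :: lpoly)"
  by (simp only: prod.lessThan_Suc_shift[of g "Suc s"] prod.lessThan_Suc[of "\<lambda>i. g (Suc i)" s] mult.assoc)

lemma lKbr_prod_Suc_Suc_middle: "(\<Prod>i<Suc (Suc s). lKbr (c + 1 - int i)) = lKbr (c + 1) * lKbr (c - s) * (\<Prod>i<s. lKbr (c - int i))"
proof -
  have "(\<Prod>i<Suc (Suc s). lKbr (c + 1 - int i)) = lKbr (c + 1) * (\<Prod>i<s. lKbr (c - int i)) * lKbr (c - int s)"
    unfolding prod_lessThan_Suc_Suc_middle by (simp add: algebra_simps)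
  then show ?thesis by (simp add: mult_ac)
qed

lemma lKbr_prod_Suc_Suc_last: "(\<Prod>i<Suc (Suc s). lKbr (c - int i)) = lKbr (c - s) * lKbr (c - s - 1) * (\<Prod>i<s. lKbr (c - int i))"
  unfolding prod.lessThan_Suc by (simp add: algebra_simps)

lemma qfact_Suc_Suc: "qfact (Suc (Suc s)) = qfact s * qint (int s + 1) * qint (int s + 2)"
  by (simp add: qfact_Suc add.commute)

lemma lKbin_recurrence_Suc_Suc: "lKbin (c + 2) (Suc (Suc s)) = lconst (qpow (int s + 2) + qpow (- (int s + 2))) * lKbin (c + 1) (Suc (Suc s))
   - lKbin c (Suc (Suc s)) + lKbin c s"
proof -
  define P where "P = (\<Prod>i<s. lKbr (c - int i))"
  define a where "a = inverse (qfact (Suc (Suc s)))"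
  have k1: "lKbin (c + 2) (Suc (Suc s)) = lconst a * (lKbr (c + 2) * lKbr (c + 1) * P)"
    unfolding lKbin_def a_def P_def lKbr_prod_Suc_Suc_first ..
  have k2: "lKbin (c + 1) (Suc (Suc s)) = lconst a * (lKbr (c + 1) * lKbr (c - s) * P)"
    unfolding lKbin_def a_def P_def lKbr_prod_Suc_Suc_middle ..
  have k3: "lKbin c (Suc (Suc s)) = lconst a * (lKbr (c - s) * lKbr (c - s - 1) * P)"
    unfolding lKbin_def a_def P_def lKbr_prod_Suc_Suc_last ..
  have k4: "lKbin c s = lconst (a * (qint (int s + 2) * qint (int s + 1))) * P"
    unfolding lKbin_def a_def P_def qfact_Suc_Suc
    using qint_nz[of "int s + 1"] qint_nz[of "int s + 2"] by (simp add: field_simps)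
  have q: "lKbr (c + 2) * lKbr (c + 1) = lconst (qpow (int s + 2) + qpow (- (int s + 2))) * (lKbr (c + 1) * lKbr (c - s))
     - lKbr (c - s) * lKbr (c - s - 1) + lconst (qint (int s + 2) * qint (int s + 1))"
    using lKbr_quadratic[of c "int s"] by (simp add: algebra_simps)
  show ?thesis unfolding k1 k2 k3 k4 q by (simp add: algebra_simps lconst_mult[symmetric])
qed

lemma lKbin_recurrence_1: "lKbin (c + 2) (Suc 0) = lconst (qpow 1 + qpow (- 1)) * lKbin (c + 1) (Suc 0) - lKbin c (Suc 0)"
  using lKbr_recurrence[of c] by (simp add: lKbin_def qfact_Suc algebra_simps)

lemma lKbin_recurrence_0: "lKbin (c + 2) 0 = lconst (qpow 0 + qpow (- 0)) * lKbin (c + 1) 0 - lKbin c 0"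
  by (simp add: lconst_def)

lemma lKbin_Suc_diff:
  "lconst (qint (int (Suc t))) * (lKbin (c + 1) (Suc t) - lconst u * lKbin c (Suc t))
     = (lKbr (c + 1) - lconst u * lKbr (c - int t)) * lKbin c t"
  using lKbin_Suc_left[of t "c + 1"] lKbin_Suc_right[of t c] by (simp add: algebra_simps)

lemma lKinv_mult_lKbin:
  "lKinv * lKbin c t = lconst (qpow (c - int t)) * (lKbin (c + 1) (Suc t) - lconst (qpow (int t + 1)) * lKbin c (Suc t))"
proof -
  have "lconst (qint (int (Suc t))) * (lKbin (c + 1) (Suc t) - lconst (qpow (int t + 1)) * lKbin c (Suc t))
      = lconst (qint (int (Suc t))) * (lconst (qpow (int t - c)) * (lKinv * lKbin c t))"
    unfolding lKbin_Suc_diff using lKbr_diff_lKinv[of "c + 1" "c - int t"]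
    by (simp add: lconst_mult[symmetric] algebra_simps)
  then have "lKbin (c + 1) (Suc t) - lconst (qpow (int t + 1)) * lKbin c (Suc t)
      = lconst (qpow (int t - c)) * (lKinv * lKbin c t)"
    by (rule lconst_cancel[OF qint_nz, rotated]) simp
  then show ?thesis by (simp add: lconst_mult mult.assoc[symmetric] qpow_add[symmetric])
qed

lemma lK_mult_lKbin:
  "lK * lKbin c t = lconst (qpow (int t - c)) * (lKbin (c + 1) (Suc t) - lconst (qpow (- (int t + 1))) * lKbin c (Suc t))"
proof -
  have "lconst (qint (int (Suc t))) * (lKbin (c + 1) (Suc t) - lconst (qpow (- (int t + 1))) * lKbin c (Suc t))
      = lconst (qint (int (Suc t))) * (lconst (qpow (c - int t)) * (lK * lKbin c t))"
    unfolding lKbin_Suc_diff using lKbr_diff_lK[of "c + 1" "c - int t"]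
    by (simp add: lconst_mult[symmetric] algebra_simps)
  then have "lKbin (c + 1) (Suc t) - lconst (qpow (- (int t + 1))) * lKbin c (Suc t)
      = lconst (qpow (c - int t)) * (lK * lKbin c t)"
    by (rule lconst_cancel[OF qint_nz, rotated]) simp
  then show ?thesis by (simp add: lconst_mult mult.assoc[symmetric] qpow_add[symmetric])
qed

lemma qint_mult_lKbin: "lconst (qint N) * lKbin (c + 1) (Suc t)
   = lconst (qint (N - int (Suc t))) * lKbin c (Suc t) + lKbr (c + N - int t) * lKbin c t"
proof -
  have l3: "lconst (qint N) * lKbr (c + 1) = lconst (qint (N - int (Suc t))) * lKbr (c - int t) + lconst (qint (int (Suc t))) * lKbr (c + N - int t)"
    using qint_add_lKbr[of "N - int (Suc t)" "int (Suc t)" "c + 1"] by (simp add: algebra_simps)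
  have "lconst (qint (int (Suc t))) * (lconst (qint N) * lKbin (c + 1) (Suc t))
      = lconst (qint N) * lKbr (c + 1) * lKbin c t"
    using lKbin_Suc_left[of t "c + 1"] by (simp add: mult_ac)
  also have "\<dots> = lconst (qint (N - int (Suc t))) * (lKbin c t * lKbr (c - int t)) + lconst (qint (int (Suc t))) * (lKbr (c + N - int t) * lKbin c t)"
    unfolding l3 by (simp add: algebra_simps)
  also have "\<dots> = lconst (qint (int (Suc t))) * (lconst (qint (N - int (Suc t))) * lKbin c (Suc t) + lKbr (c + N - int t) * lKbin c t)"
    using lKbin_Suc_right[of t c] by (simp add: algebra_simps)
  finally show ?thesis
    by (rule lconst_cancel[OF qint_nz, rotated]) simp
qed

lemma qint_Suc_lKbr: "lconst (qint (a + 1)) * lKbr (- a) = lconst (qint a) * lKbr (- a - 1) + lKbr 0"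
  using qint_add_lKbr[of a 1 "- a"] by simp

lemma lKbr_prod_add: "(\<Prod>i<t + s. lKbr (c - int i)) = (\<Prod>i<t. lKbr (c - int i)) * (\<Prod>i<s. lKbr (c - int t - int i))"
  by (induction s) (simp_all add: mult_ac algebra_simps)

lemma lKbin_mult_shifted: "lKbin c t * lKbin (c - int t) s = lconst (qfact (t + s) / (qfact t * qfact s)) * lKbin c (t + s)"
proof -
  have sc: "inverse (qfact t) * inverse (qfact s) = qfact (t + s) / (qfact t * qfact s) * inverse (qfact (t + s))"
    by (simp add: field_simps)
  have "lKbin c t * lKbin (c - int t) s = lconst (inverse (qfact t) * inverse (qfact s))
     * ((\<Prod>i<t. lKbr (c - int i)) * (\<Prod>i<s. lKbr (c - int t - int i)))"
    unfolding lKbin_def by (simp only: lconst_mult[symmetric] mult_ac)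
  also have "\<dots> = lconst (qfact (t + s) / (qfact t * qfact s)) * lKbin c (t + s)"
    unfolding sc lKbin_def lKbr_prod_add by (simp only: lconst_mult[symmetric] mult_ac)
  finally show ?thesis .
qed

definition twist :: "lpoly \<Rightarrow> lpoly" where
  "twist f = Poly_Mapping.mapp (\<lambda>n c. qpow (-2 * n) * c) f"

lemma lookup_twist: "lookup (twist f) n = qpow (-2 * n) * lookup f n"
  by (auto simp: twist_def lookup_mapp when_def in_keys_iff)

lemma twist_add: "twist (f + g) = twist f + twist g"
  by (rule poly_mapping_eqI) (simp add: lookup_twist lookup_add algebra_simps)

lemma twist_0 [simp]: "twist 0 = 0"
  by (rule poly_mapping_eqI) (simp add: lookup_twist)

lemma twist_single: "twist (single k c) = single k (qpow (-2 * k) * c)"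
  by (rule poly_mapping_eqI) (simp add: lookup_twist lookup_single_if)

lemma twist_mult: "twist (f * g) = twist f * twist g"
proof (induction f rule: poly_mapping_induct)
  case zero then show ?case by simp
next
  case (single k c f)
  have "twist (single k c * g) = twist (single k c) * twist g"
  proof (induction g rule: poly_mapping_induct)
    case zero then show ?case by simp
  next
    case (single l d g)
    then show ?case
      by (simp add: distrib_left twist_add mult_single twist_single qpow_add[symmetric] algebra_simps)
  qed
  then show ?case using single by (simp add: distrib_right twist_add)
qed

lemma twist_lconst [simp]: "twist (lconst a) = lconst a"
  by (simp add: lconst_def twist_single)

lemma twist_1 [simp]: "twist 1 = 1"
  using twist_lconst[of 1] by simp

lemma twist_prod: "twist (prod f S) = (\<Prod>i\<in>S. twist (f i))"
  by (induction S rule: infinite_finite_induct) (auto simp: twist_mult)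

lemma twist_lKbr: "twist (lKbr c) = lKbr (c - 2)"
  by (rule poly_mapping_eqI) (auto simp: lookup_twist lookup_lKbr qpow_add[symmetric] qpow_diff qpow_minus field_simps)

lemma twist_lKbin: "twist (lKbin c t) = lKbin (c - 2) t"
  by (simp add: lKbin_def twist_mult twist_prod twist_lKbr algebra_simps)

definition Kpow :: "int \<Rightarrow> falg" where
  "Kpow n = (if n \<ge> 0 then K ^ nat n else Ki ^ nat (- n))"

definition evalK :: "lpoly \<Rightarrow> falg" where
  "evalK f = (\<Sum>n\<in>keys f. scal (lookup f n) (Kpow n))"

lemma evalK_superset: "finite S \<Longrightarrow> keys f \<subseteq> S \<Longrightarrow> evalK f = (\<Sum>n\<in>S. scal (lookup f n) (Kpow n))"
  unfolding evalK_def by (rule sum.mono_neutral_left) (auto simp: in_keys_iff)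

lemma evalK_add: "evalK (f + g) = evalK f + evalK g"
proof -
  let ?S = "keys f \<union> keys g"
  have "keys (f + g) \<subseteq> ?S" by (rule keys_add)
  then have "evalK (f + g) = (\<Sum>n\<in>?S. scal (lookup (f + g) n) (Kpow n))" by (intro evalK_superset) auto
  also have "\<dots> = (\<Sum>n\<in>?S. scal (lookup f n) (Kpow n)) + (\<Sum>n\<in>?S. scal (lookup g n) (Kpow n))"
    by (simp add: lookup_add scal_add_left sum.distrib)
  also have "\<dots> = evalK f + evalK g" by (subst (1 2) evalK_superset[of ?S]) auto
  finally show ?thesis .
qed

lemma evalK_0 [simp]: "evalK 0 = 0" by (simp add: evalK_def)

lemma evalK_uminus: "evalK (- f) = - evalK f"
proof -
  have "evalK f + evalK (- f) = 0" using evalK_add[of f "- f"] by simp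
  then show ?thesis by (rule minus_unique[symmetric])
qed

lemma evalK_diff: "evalK (f - g) = evalK f - evalK g"
  using evalK_add[of f "- g"] evalK_uminus[of g] by simp

lemma evalK_single: "evalK (single k c) = scal c (Kpow k)"
  by (subst evalK_superset[of "{k}"]) (auto simp: lookup_single_if)

lemma evalK_lconst_mult: "evalK (lconst a * f) = scal a (evalK f)"
proof -
  have "keys (lconst a * f) \<subseteq> keys f" by (auto simp: in_keys_iff)
  then have "evalK (lconst a * f) = (\<Sum>n\<in>keys f. scal (lookup (lconst a * f) n) (Kpow n))" by (intro evalK_superset) auto
  also have "\<dots> = scal a (evalK f)" by (simp add: evalK_def scal_sum_right scal_scal)
  finally show ?thesis .
qed

lemma Kpow_0 [simp]: "Kpow 0 = 1" by (simp add: Kpow_def)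

lemma evalK_1 [simp]: "evalK 1 = 1"
  using evalK_single[of 0 1] by simp

lemma evalK_lK: "evalK lK = K" by (simp add: evalK_single Kpow_def)
lemma evalK_lKinv: "evalK lKinv = Ki" by (simp add: evalK_single Kpow_def)

lemma Kpow_nat: "Kpow (int k) = K ^ k" by (simp add: Kpow_def)
lemma Kpow_neg: "Kpow (- int k) = Ki ^ k" unfolding Kpow_def by (cases "k = 0") auto
lemma Kpow_Suc: "Kpow (int (Suc k)) = K * Kpow (int k)" by (simp only: Kpow_nat power_Suc)
lemma Kpow_neg_Suc: "Kpow (- int (Suc k)) = Ki * Kpow (- int k)" by (simp only: Kpow_neg power_Suc)

lemma K_Kpow: "K * Kpow m \<doteq> Kpow (m + 1)"
proof (cases "m \<ge> 0")
  case True
  then obtain k where "m = int k" by (metis nonneg_eq_int)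
  then show ?thesis using Kpow_nat[of "Suc k"] by (simp add: Kpow_nat add.commute)
next
  case False
  then obtain k where m: "m = - int (Suc k)" by (intro that[of "nat (- m) - 1"]) simp
  have "K * Kpow m = K * Ki * Ki ^ k" using Kpow_neg[of "Suc k"] by (simp add: m mult.assoc)
  also have "\<dots> \<doteq> 1 * Ki ^ k" by (rule ueq_mult_right[OF K_Kinv])
  also have "1 * Ki ^ k = Kpow (m + 1)" using Kpow_neg[of k] by (simp add: m)
  finally show ?thesis .
qed

lemma Kinv_Kpow: "Ki * Kpow m \<doteq> Kpow (m - 1)"
proof (cases "m > 0")
  case True
  then obtain k where m: "m = int (Suc k)" by (intro that[of "nat m - 1"]) simp
  have "Ki * Kpow m = Ki * K * K ^ k" using Kpow_nat[of "Suc k"] by (simp add: m mult.assoc)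
  also have "\<dots> \<doteq> 1 * K ^ k" by (rule ueq_mult_right[OF Kinv_K])
  also have "1 * K ^ k = Kpow (m - 1)" using Kpow_nat[of k] by (simp add: m)
  finally show ?thesis .
next
  case False
  then obtain k where m: "m = - int k" by (intro that[of "nat (- m)"]) simp
  have e: "- int k - 1 = - int (Suc k)" by simp
  have "Kpow (- int k - 1) = Ki * Kpow (- int k)" by (simp only: e Kpow_neg_Suc)
  then show ?thesis by (simp add: m)
qed

lemma Kpow_mult_nat: "Kpow (int k) * Kpow n \<doteq> Kpow (int k + n)"
proof (induction k arbitrary: n)
  case 0 then show ?case by simp
next
  case (Suc k)
  have "Kpow (int (Suc k)) * Kpow n = K * (Kpow (int k) * Kpow n)" by (simp only: Kpow_Suc mult.assoc)
  also have "\<dots> \<doteq> K * Kpow (int k + n)" by (rule ueq_mult_left[OF Suc.IH])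
  also have "\<dots> \<doteq> Kpow (int k + n + 1)" by (rule K_Kpow)
  finally show ?case by (simp add: algebra_simps)
qed

lemma Kpow_mult_neg: "Kpow (- int k) * Kpow n \<doteq> Kpow (- int k + n)"
proof (induction k arbitrary: n)
  case 0 then show ?case by simp
next
  case (Suc k)
  have "Kpow (- int (Suc k)) * Kpow n = Ki * (Kpow (- int k) * Kpow n)" by (simp only: Kpow_neg power_Suc mult.assoc)
  also have "\<dots> \<doteq> Ki * Kpow (- int k + n)" by (rule ueq_mult_left[OF Suc.IH])
  also have "\<dots> \<doteq> Kpow (- int k + n - 1)" by (rule Kinv_Kpow)
  finally show ?case by (simp add: algebra_simps)
qed

lemma Kpow_mult: "Kpow m * Kpow n \<doteq> Kpow (m + n)"
proof (cases "m \<ge> 0")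
  case True
  then obtain k where "m = int k" by (metis nonneg_eq_int)
  then show ?thesis using Kpow_mult_nat by simp
next
  case False
  then obtain k where "m = - int k" by (intro that[of "nat (- m)"]) simp
  then show ?thesis using Kpow_mult_neg by simp
qed

lemma evalK_mult: "evalK (f * g) \<doteq> evalK f * evalK g"
proof (induction f rule: poly_mapping_induct)
  case zero then show ?case by simp
next
  case (single k c f)
  have "evalK (single k c * g) \<doteq> evalK (single k c) * evalK g"
  proof (induction g rule: poly_mapping_induct)
    case zero then show ?case by simp
  next
    case (single l d g)
    have "evalK (single k c * single l d) \<doteq> evalK (single k c) * evalK (single l d)"
    proof -
      have "evalK (single k c * single l d) = scal (c * d) (Kpow (k + l))"
        by (simp add: mult_single evalK_single)
      also have "\<dots> \<doteq> scal (c * d) (Kpow k * Kpow l)" by (rule ueq_scal[OF ueq_sym[OF Kpow_mult]])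
      also have "scal (c * d) (Kpow k * Kpow l) = evalK (single k c) * evalK (single l d)"
        by (simp add: evalK_single scal_mult_left scal_mult_right scal_scal mult.commute)
      finally show ?thesis .
    qed
    then show ?case using single
      by (simp add: distrib_left evalK_add ueq_add)
  qed
  then show ?case using single by (simp add: distrib_right evalK_add ueq_add)
qed

lemma evalK_prod: "evalK (\<Prod>i<t. f i) \<doteq> prod_list (map (\<lambda>i. evalK (f i)) [0..<t])"
proof (induction t)
  case 0 then show ?case by simp
next
  case (Suc t)
  have "evalK ((\<Prod>i<t. f i) * f t) \<doteq> evalK (\<Prod>i<t. f i) * evalK (f t)" by (rule evalK_mult)
  also have "\<dots> \<doteq> prod_list (map (\<lambda>i. evalK (f i)) [0..<t]) * evalK (f t)"
    by (rule ueq_mult_right[OF Suc.IH])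
  finally show ?case by simp
qed

lemma evalK_lKbr: "evalK (lKbr c) = Kbr c"
  by (simp add: lKbr_def Kbr_def evalK_diff evalK_single Kpow_def scal_diff_right scal_scal divide_inverse mult.commute qdiff_def[symmetric])

lemma evalK_lKbin: "evalK (lKbin c t) \<doteq> Kbin c t"
  unfolding lKbin_def Kbin_def evalK_lconst_mult
  by (rule ueq_scal) (use evalK_prod[of "\<lambda>i. lKbr (c - int i)" t] in \<open>simp add: evalK_lKbr\<close>)

section \<open>Commuting E past F and K\<close>

lemma power_commute_ueq:
  assumes "g * X \<doteq> scal a (X * g)"
  shows "g ^ k * X \<doteq> scal (a ^ k) (X * g ^ k)"
proof (induction k)
  case (Suc k)
  have "g ^ Suc k * X = g * (g ^ k * X)" by (simp add: mult.assoc)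
  also have "\<dots> \<doteq> g * scal (a ^ k) (X * g ^ k)" by (rule ueq_mult_left[OF Suc.IH])
  also have "\<dots> = scal (a ^ k) ((g * X) * g ^ k)" by (simp add: scal_mult_right mult.assoc)
  also have "\<dots> \<doteq> scal (a ^ k) (scal a (X * g) * g ^ k)" by (intro ueq_scal ueq_mult_right assms)
  also have "\<dots> = scal (a ^ Suc k) (X * g ^ Suc k)"
    by (simp add: scal_mult_left scal_scal mult.assoc mult.commute power_commutes)
  finally show ?case .
qed simp

lemma Kpow_commute:
  assumes "a \<noteq> 0" "K * X \<doteq> scal a (X * K)"
  shows "Kpow n * X \<doteq> scal (a powi n) (X * Kpow n)"
proof (cases "n \<ge> 0")
  case True
  then show ?thesis
    using power_commute_ueq[OF assms(2), of "nat n"] by (simp add: Kpow_def power_int_def)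
next
  case False
  then show ?thesis
    using power_commute_ueq[OF Kinv_commute_of_K_commute[OF assms(2,1)], of "nat (- n)"]
    by (simp add: Kpow_def power_int_def power_inverse)
qed

lemma Kpow_F: "Kpow n * F \<doteq> scal (qpow (-2 * n)) (F * Kpow n)"
proof -
  have "Kpow n * F \<doteq> scal (qpow (-2) powi n) (F * Kpow n)"
    by (rule Kpow_commute[OF _ K_F]) simp
  moreover have "qpow (-2) powi n = qpow (-2 * n)" by (simp only: power_int_mult[symmetric])
  ultimately show ?thesis by simp
qed

lemma Kpow_E: "Kpow n * E \<doteq> scal (qpow (2 * n)) (E * Kpow n)"
proof -
  have "Kpow n * E \<doteq> scal (qpow 2 powi n) (E * Kpow n)"
    by (rule Kpow_commute[OF _ K_E]) simp
  moreover have "qpow 2 powi n = qpow (2 * n)" by (simp only: power_int_mult[symmetric])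
  ultimately show ?thesis by simp
qed

lemma E_Kpow: "E * Kpow n \<doteq> scal (qpow (-2 * n)) (Kpow n * E)"
proof -
  have "scal (qpow (-2 * n)) (Kpow n * E) \<doteq> scal (qpow (-2 * n)) (scal (qpow (2 * n)) (E * Kpow n))"
    by (rule ueq_scal[OF Kpow_E])
  moreover have "qpow (-2 * n) * qpow (2 * n) = 1" by (simp add: qpow_add[symmetric])
  ultimately show ?thesis by (simp add: scal_scal ueq_sym)
qed

lemma evalK_F: "evalK g * F \<doteq> F * evalK (twist g)"
proof -
  have keys: "keys (twist g) \<subseteq> keys g" by (auto simp: in_keys_iff lookup_twist)
  have "evalK g * F = (\<Sum>n\<in>keys g. scal (lookup g n) (Kpow n * F))"
    by (simp add: evalK_def sum_distrib_right scal_mult_left)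
  also have "\<dots> \<doteq> (\<Sum>n\<in>keys g. scal (lookup g n) (scal (qpow (-2 * n)) (F * Kpow n)))"
    by (intro ueq_sum ueq_scal Kpow_F)
  also have "\<dots> = F * evalK (twist g)"
    by (simp add: evalK_superset[OF finite_keys keys] sum_distrib_left scal_mult_right scal_scal lookup_twist mult.commute)
  finally show ?thesis .
qed

lemma E_evalK: "E * evalK g \<doteq> evalK (twist g) * E"
proof -
  have keys: "keys (twist g) \<subseteq> keys g" by (auto simp: in_keys_iff lookup_twist)
  have "E * evalK g = (\<Sum>n\<in>keys g. scal (lookup g n) (E * Kpow n))"
    by (simp add: evalK_def sum_distrib_left scal_mult_right)
  also have "\<dots> \<doteq> (\<Sum>n\<in>keys g. scal (lookup g n) (scal (qpow (-2 * n)) (Kpow n * E)))"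
    by (intro ueq_sum ueq_scal E_Kpow)
  also have "\<dots> = evalK (twist g) * E"
    by (simp add: evalK_superset[OF finite_keys keys] sum_distrib_right scal_mult_left scal_scal lookup_twist mult.commute)
  finally show ?thesis .
qed

lemma evalK_F_power: "evalK g * F ^ a \<doteq> F ^ a * evalK ((twist ^^ a) g)"
proof (induction a arbitrary: g)
  case 0 then show ?case by simp
next
  case (Suc a)
  have "evalK g * F ^ Suc a = (evalK g * F) * F ^ a" by (simp add: mult.assoc)
  also have "\<dots> \<doteq> (F * evalK (twist g)) * F ^ a" by (rule ueq_mult_right[OF evalK_F])
  also have "\<dots> = F * (evalK (twist g) * F ^ a)" by (simp add: mult.assoc)
  also have "\<dots> \<doteq> F * (F ^ a * evalK ((twist ^^ a) (twist g)))" by (rule ueq_mult_left[OF Suc.IH])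
  also have "\<dots> = F ^ Suc a * evalK ((twist ^^ Suc a) g)" by (simp only: funpow_Suc_right comp_apply power_Suc mult.assoc)
  finally show ?case .
qed

lemma E_power_evalK: "E ^ n * evalK g \<doteq> evalK ((twist ^^ n) g) * E ^ n"
proof (induction n arbitrary: g)
  case 0 then show ?case by simp
next
  case (Suc n)
  have "E ^ Suc n * evalK g = E ^ n * (E * evalK g)" by (simp only: mult.assoc power_Suc2)
  also have "\<dots> \<doteq> E ^ n * (evalK (twist g) * E)" by (rule ueq_mult_left[OF E_evalK])
  also have "\<dots> = (E ^ n * evalK (twist g)) * E" by (simp add: mult.assoc)
  also have "\<dots> \<doteq> (evalK ((twist ^^ n) (twist g)) * E ^ n) * E" by (rule ueq_mult_right[OF Suc.IH])
  also have "\<dots> = evalK ((twist ^^ Suc n) g) * E ^ Suc n" by (simp only: funpow_Suc_right comp_apply power_Suc2 mult.assoc)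
  finally show ?case .
qed

lemma evalK_lKbr_0: "evalK (lKbr 0) = scal (inverse qdiff) (K - Ki)"
  by (simp add: evalK_lKbr Kbr_def qdiff_def[symmetric])

lemma E_F_commutator_evalK: "E * F \<doteq> F * E + evalK (lKbr 0)"
  using E_F_commutator by (simp add: evalK_lKbr_0)

lemma scal_qint_F_power_pred: "scal (qint (int a)) (F ^ (a - 1) * F * X) = scal (qint (int a)) (F ^ a * X)"
  by (cases a) (simp_all add: power_Suc2[symmetric])

lemma E_F_power: "E * F ^ a \<doteq> F ^ a * E + scal (qint (int a)) (F ^ (a - 1) * evalK (lKbr (1 - int a)))"
proof (induction a)
  case 0 then show ?case by simp
next
  case (Suc a)
  have sk: "evalK (twist (lKbr (1 - int a))) = evalK (lKbr (- int a - 1))"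
  proof -
    have "1 - int a - 2 = - int a - 1" by simp
    then show ?thesis by (simp only: twist_lKbr)
  qed
  have "E * F ^ Suc a = (E * F ^ a) * F" by (simp only: power_Suc2 mult.assoc)
  also have "\<dots> \<doteq> (F ^ a * E + scal (qint (int a)) (F ^ (a - 1) * evalK (lKbr (1 - int a)))) * F"
    by (rule ueq_mult_right[OF Suc.IH])
  also have "\<dots> = F ^ a * (E * F) + scal (qint (int a)) (F ^ (a - 1) * (evalK (lKbr (1 - int a)) * F))"
    by (simp add: distrib_right scal_mult_left mult.assoc)
  also have "\<dots> \<doteq> F ^ a * (F * E + evalK (lKbr 0)) + scal (qint (int a)) (F ^ (a - 1) * (F * evalK (twist (lKbr (1 - int a)))))"
    by (intro ueq_add ueq_mult_left ueq_scal E_F_commutator_evalK evalK_F)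
  also have "\<dots> = F ^ Suc a * E + (F ^ a * evalK (lKbr 0) + scal (qint (int a)) (F ^ (a - 1) * F * evalK (twist (lKbr (1 - int a)))))"
    by (simp only: distrib_left mult.assoc power_Suc2 add.assoc)
  also have "\<dots> = F ^ Suc a * E + F ^ a * evalK (lKbr 0 + lconst (qint (int a)) * lKbr (- int a - 1))"
    by (simp only: sk scal_qint_F_power_pred evalK_add evalK_lconst_mult scal_mult_right distrib_left)
  also have "lKbr 0 + lconst (qint (int a)) * lKbr (- int a - 1) = lconst (qint (int a + 1)) * lKbr (- int a)"
    using qint_Suc_lKbr[of "int a"] by simp
  also have "F ^ Suc a * E + F ^ a * evalK (lconst (qint (int a + 1)) * lKbr (- int a))
     = F ^ Suc a * E + scal (qint (int (Suc a))) (F ^ (Suc a - 1) * evalK (lKbr (1 - int (Suc a))))"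
    by (simp add: evalK_lconst_mult scal_mult_right add.commute)
  finally show ?case .
qed

text \<open>Extending F^(m) by 0 to negative m spares the commutation formula below any case distinction.\<close>

definition Fdiv_int :: "int \<Rightarrow> falg" where
  "Fdiv_int m = (if m < 0 then 0 else Fdiv (nat m))"

lemma Fdiv_0 [simp]: "Fdiv 0 = 1" by (simp add: Fdiv_def)
lemma Ediv_0 [simp]: "Ediv 0 = 1" by (simp add: Ediv_def)

lemma Fdiv_int_nat [simp]: "Fdiv_int (int a) = Fdiv a" by (simp add: Fdiv_int_def)
lemma Fdiv_int_neg: "m < 0 \<Longrightarrow> Fdiv_int m = 0" by (simp add: Fdiv_int_def)
lemma Fdiv_int_0 [simp]: "Fdiv_int 0 = 1" by (simp add: Fdiv_int_def)

lemma E_Fdiv_int: "E * Fdiv_int m \<doteq> Fdiv_int m * E + Fdiv_int (m - 1) * evalK (lKbr (1 - m))"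
proof (cases "m < 0")
  case True then show ?thesis by (simp add: Fdiv_int_neg)
next
  case False
  then obtain a where m: "m = int a" by (metis nonneg_eq_int not_less)
  show ?thesis
  proof (cases a)
    case 0 then show ?thesis by (simp add: m Fdiv_int_neg)
  next
    case (Suc b)
    have FDm: "Fdiv_int m = Fdiv a" by (simp add: m)
    have ab: "a - 1 = b" "int a = m" using Suc m by auto
    have "E * Fdiv_int m = scal (inverse (qfact a)) (E * F ^ a)"
      by (simp only: FDm Fdiv_def scal_mult_right)
    also have "\<dots> \<doteq> scal (inverse (qfact a)) (F ^ a * E + scal (qint (int a)) (F ^ (a - 1) * evalK (lKbr (1 - int a))))"
      by (rule ueq_scal[OF E_F_power])
    also have "\<dots> = Fdiv_int m * E + scal (inverse (qfact a) * qint (int a)) (F ^ b * evalK (lKbr (1 - m)))"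
      by (simp only: FDm ab Fdiv_def scal_add_right scal_scal scal_mult_left)
    also have "inverse (qfact a) * qint (int a) = inverse (qfact b)"
      using qint_nz[of "int a"] by (simp add: Suc qfact_Suc del: of_nat_Suc)
    also have "scal (inverse (qfact b)) (F ^ b * evalK (lKbr (1 - m))) = Fdiv_int (m - 1) * evalK (lKbr (1 - m))"
      by (simp add: m Suc Fdiv_def scal_mult_left)
    finally show ?thesis .
  qed
qed

lemma E_Ediv: "E * Ediv n = scal (qint (int (Suc n))) (Ediv (Suc n))"
proof -
  have "qint (int (Suc n)) * inverse (qfact (Suc n)) = inverse (qfact n)"
    using qint_nz[of "int (Suc n)"] by (simp add: qfact_Suc del: of_nat_Suc)
  then show ?thesis by (simp add: Ediv_def scal_mult_right scal_scal)
qed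

lemma Ediv_mult: "Ediv n * Ediv m = scal (qfact (n + m) / (qfact n * qfact m)) (Ediv (n + m))"
proof -
  have sc: "inverse (qfact m) * inverse (qfact n) = qfact (n + m) / (qfact n * qfact m) * inverse (qfact (n + m))"
    by (simp add: field_simps)
  show ?thesis by (simp only: Ediv_def scal_mult_right scal_mult_left scal_scal power_add sc)
qed

lemma Fdiv_mult: "Fdiv n * Fdiv m = scal (qfact (n + m) / (qfact n * qfact m)) (Fdiv (n + m))"
proof -
  have sc: "inverse (qfact m) * inverse (qfact n) = qfact (n + m) / (qfact n * qfact m) * inverse (qfact (n + m))"
    by (simp add: field_simps)
  show ?thesis by (simp only: Fdiv_def scal_mult_right scal_mult_left scal_scal power_add sc)
qed

lemma Ediv_evalK: "Ediv n * evalK g \<doteq> evalK ((twist ^^ n) g) * Ediv n"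
  unfolding Ediv_def scal_mult_left scal_mult_right by (rule ueq_scal[OF E_power_evalK])

lemma evalK_Fdiv: "evalK g * Fdiv a \<doteq> Fdiv a * evalK ((twist ^^ a) g)"
  unfolding Fdiv_def scal_mult_left scal_mult_right by (rule ueq_scal[OF evalK_F_power])

lemma E_Fdiv_evalK_Ediv:
  "E * (Fdiv_int x * evalK g * Ediv m) \<doteq> Fdiv_int x * evalK (lconst (qint (int m + 1)) * twist g) * Ediv (Suc m) + Fdiv_int (x - 1) * evalK (lKbr (1 - x) * g) * Ediv m"
proof -
  have "E * (Fdiv_int x * evalK g * Ediv m) = (E * Fdiv_int x) * evalK g * Ediv m" by (simp add: mult.assoc)
  also have "\<dots> \<doteq> (Fdiv_int x * E + Fdiv_int (x - 1) * evalK (lKbr (1 - x))) * evalK g * Ediv m"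
    by (intro ueq_mult_right E_Fdiv_int)
  also have "\<dots> = Fdiv_int x * (E * evalK g) * Ediv m + Fdiv_int (x - 1) * (evalK (lKbr (1 - x)) * evalK g) * Ediv m"
    by (simp add: distrib_right mult.assoc)
  also have "\<dots> \<doteq> Fdiv_int x * (evalK (twist g) * E) * Ediv m + Fdiv_int (x - 1) * evalK (lKbr (1 - x) * g) * Ediv m"
    by (intro ueq_add ueq_mult_right ueq_mult_left E_evalK ueq_sym[OF evalK_mult])
  also have "\<dots> = Fdiv_int x * evalK (lconst (qint (int m + 1)) * twist g) * Ediv (Suc m) + Fdiv_int (x - 1) * evalK (lKbr (1 - x) * g) * Ediv m"
    by (simp add: mult.assoc E_Ediv evalK_lconst_mult scal_mult_right scal_mult_left add.commute)
  finally show ?thesis .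
qed

lemma qint_lKbin_EF_step:
  "lconst (qint (int (Suc n))) * lKbin (2 * int (Suc t) - int (Suc n) - a) (Suc t)
     = lconst (qint (int n - int t)) * lKbin (2 * int t - int n - a) (Suc t)
       + lKbr (1 - (a - int t)) * lKbin (2 * int t - int n - a) t"
proof -
  define c where "c = 2 * int t - int n - a"
  have "2 * int (Suc t) - int (Suc n) - a = c + 1" "int (Suc n) - int (Suc t) = int n - int t"
    "c + int (Suc n) - int t = 1 - (a - int t)"
    by (simp_all add: c_def)
  then show ?thesis unfolding c_def[symmetric] by (simp only: qint_mult_lKbin)
qed

definition EF_sum :: "nat \<Rightarrow> int \<Rightarrow> falg" where
  "EF_sum n a = (\<Sum>j\<le>n. Fdiv_int (a - int j) * evalK (lKbin (2 * int j - int n - a) j) * Ediv (n - j))"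

lemma EF_sum_0: "EF_sum 0 a = Fdiv_int a"
  by (simp add: EF_sum_def)

lemma qint_EF_sum_Suc:
  "scal (qint (int (Suc n))) (EF_sum (Suc n) a) =
     (\<Sum>j\<le>n. Fdiv_int (a - int j) * evalK (lconst (qint (int (n - j) + 1)) * twist (lKbin (2 * int j - int n - a) j)) * Ediv (Suc (n - j)))
   + (\<Sum>j\<le>n. Fdiv_int (a - int j - 1) * evalK (lKbr (1 - (a - int j)) * lKbin (2 * int j - int n - a) j) * Ediv (n - j))"
proof -
  define T1 where "T1 j = Fdiv_int (a - int j) * evalK (lconst (qint (int (n - j) + 1)) * twist (lKbin (2 * int j - int n - a) j)) * Ediv (Suc (n - j))" for j
  define T2 where "T2 j = Fdiv_int (a - int j - 1) * evalK (lKbr (1 - (a - int j)) * lKbin (2 * int j - int n - a) j) * Ediv (n - j)" for j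
  define A where "A t = Fdiv_int (a - int (Suc t)) * evalK (lconst (qint (int n - int t)) * lKbin (2 * int t - int n - a) (Suc t)) * Ediv (n - t)" for t
  define f where "f j = Fdiv_int (a - int j) * evalK (lconst (qint (int (Suc n))) * lKbin (2 * int j - int (Suc n) - a) j) * Ediv (Suc n - j)" for j
  have "scal (qint (int (Suc n))) (EF_sum (Suc n) a) = (\<Sum>j\<le>Suc n. f j)"
    unfolding EF_sum_def f_def scal_sum_right
    by (rule sum.cong[OF refl]) (simp add: evalK_lconst_mult scal_mult_left scal_mult_right)
  also have "\<dots> = f 0 + (\<Sum>t\<le>n. f (Suc t))" by (rule sum.atMost_Suc_shift)
  also have "f 0 = T1 0" by (simp add: f_def T1_def evalK_lconst_mult scal_mult_left scal_mult_right add.commute)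
  also have "(\<Sum>t\<le>n. f (Suc t)) = (\<Sum>t\<le>n. A t + T2 t)"
  proof (rule sum.cong[OF refl])
    show "f (Suc t) = A t + T2 t" for t
      using qint_lKbin_EF_step[of n t a]
      by (simp add: f_def A_def T2_def evalK_add distrib_left distrib_right algebra_simps)
  qed
  also have "\<dots> = (\<Sum>t\<le>n. A t) + (\<Sum>t\<le>n. T2 t)" by (rule sum.distrib)
  also have "(\<Sum>t\<le>n. A t) = (\<Sum>t<n. T1 (Suc t))"
  proof -
    have "A n = 0" by (simp add: A_def evalK_lconst_mult)
    then have "(\<Sum>t\<le>n. A t) = (\<Sum>t<n. A t)" by (simp add: lessThan_Suc_atMost[symmetric])
    also have "\<dots> = (\<Sum>t<n. T1 (Suc t))"
    proof (rule sum.cong[OF refl])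
      fix t assume "t \<in> {..<n}"
      then have tn: "t < n" by simp
      have e1: "int (n - Suc t) + 1 = int n - int t" using tn by simp
      have e2: "Suc (n - Suc t) = n - t" using tn by simp
      have e3: "2 * int (Suc t) - int n - a - 2 = 2 * int t - int n - a" by simp
      show "A t = T1 (Suc t)" unfolding A_def T1_def e1 e2 twist_lKbin e3 ..
    qed
    finally show ?thesis .
  qed
  also have "T1 0 + ((\<Sum>t<n. T1 (Suc t)) + (\<Sum>t\<le>n. T2 t)) = (\<Sum>j\<le>n. T1 j) + (\<Sum>t\<le>n. T2 t)"
    by (simp add: sum.atMost_shift[of T1 n])
  finally show ?thesis unfolding T1_def T2_def .
qed

lemma Ediv_Fdiv_int: "Ediv n * Fdiv_int a \<doteq> EF_sum n a"
proof (induction n arbitrary: a)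
  case 0 then show ?case by (simp add: EF_sum_0)
next
  case (Suc n)
  have "scal (qint (int (Suc n))) (Ediv (Suc n) * Fdiv_int a) = E * (Ediv n * Fdiv_int a)"
    by (simp only: mult.assoc[symmetric] E_Ediv scal_mult_left)
  also have "\<dots> \<doteq> E * EF_sum n a" by (rule ueq_mult_left[OF Suc.IH])
  also have "E * EF_sum n a = (\<Sum>j\<le>n. E * (Fdiv_int (a - int j) * evalK (lKbin (2 * int j - int n - a) j) * Ediv (n - j)))"
    by (simp add: EF_sum_def sum_distrib_left)
  also have "\<dots> \<doteq> (\<Sum>j\<le>n. Fdiv_int (a - int j) * evalK (lconst (qint (int (n - j) + 1)) * twist (lKbin (2 * int j - int n - a) j)) * Ediv (Suc (n - j))
          + Fdiv_int (a - int j - 1) * evalK (lKbr (1 - (a - int j)) * lKbin (2 * int j - int n - a) j) * Ediv (n - j))"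
    by (intro ueq_sum E_Fdiv_evalK_Ediv)
  also have "\<dots> = scal (qint (int (Suc n))) (EF_sum (Suc n) a)"
    unfolding qint_EF_sum_Suc by (rule sum.distrib)
  finally have "scal (qint (int (Suc n))) (Ediv (Suc n) * Fdiv_int a) \<doteq> scal (qint (int (Suc n))) (EF_sum (Suc n) a)" .
  then have "scal (inverse (qint (int (Suc n)))) (scal (qint (int (Suc n))) (Ediv (Suc n) * Fdiv_int a)) \<doteq> scal (inverse (qint (int (Suc n)))) (scal (qint (int (Suc n))) (EF_sum (Suc n) a))"
    by (rule ueq_scal)
  moreover have "inverse (qint (int (Suc n))) * qint (int (Suc n)) = 1"
    using qint_nz[of "int (Suc n)"] by (simp del: of_nat_Suc)
  ultimately show ?case by (simp add: scal_scal del: of_nat_Suc)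
qed

section \<open>The A-span of the binomials [K;c,t]\<close>

inductive_set lKbin_span :: "lpoly set" where
  zero: "0 \<in> lKbin_span"
| base: "c = 0 \<or> (c = 1 \<and> t \<ge> 1) \<Longrightarrow> a \<in> Laurent \<Longrightarrow> lconst a * lKbin c t \<in> lKbin_span"
| add: "f \<in> lKbin_span \<Longrightarrow> g \<in> lKbin_span \<Longrightarrow> f + g \<in> lKbin_span"

lemma int_induct_both_ways:
  fixes P :: "int \<Rightarrow> bool"
  assumes "P c0" "\<And>c. P c \<Longrightarrow> P (c + 1)" "\<And>c. P (c + 1) \<Longrightarrow> P c"
  shows "P c"
proof (induction c rule: int_induct[where k = c0])
  case base then show ?case using assms(1) .
next
  case (step1 i) then show ?case using assms(2) by blast
next
  case (step2 i) then show ?case using assms(3)[of "i - 1"] by simp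
qed

lemma lKbin_span_smult: assumes "a \<in> Laurent" "f \<in> lKbin_span" shows "lconst a * f \<in> lKbin_span"
  using assms(2)
proof (induction f rule: lKbin_span.induct)
  case zero then show ?case by (simp add: lKbin_span.zero)
next
  case (base c t b)
  then show ?case using lKbin_span.base[of c t "a * b"] assms(1) by (simp add: lconst_mult[symmetric] mult.assoc Laurent_mult)
next
  case (add f g) then show ?case by (simp add: distrib_left lKbin_span.add)
qed

lemma lKbin_span_uminus: "f \<in> lKbin_span \<Longrightarrow> - f \<in> lKbin_span"
  using lKbin_span_smult[of "-1" f] Laurent_uminus[OF Laurent_one] by (simp add: lconst_uminus)

lemma lKbin_span_diff: "f \<in> lKbin_span \<Longrightarrow> g \<in> lKbin_span \<Longrightarrow> f - g \<in> lKbin_span"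
  using lKbin_span.add[of f "- g"] lKbin_span_uminus[of g] by simp

lemma lKbin_span_lKbin_0: "lKbin 0 t \<in> lKbin_span"
  using lKbin_span.base[of 0 t 1] Laurent_one by simp

lemma lKbin_span_lKbin_1: "lKbin 1 t \<in> lKbin_span"
proof (cases t)
  case 0 then show ?thesis using lKbin_span_lKbin_0[of 0] by simp
next
  case (Suc s) then show ?thesis using lKbin_span.base[of 1 t 1] Laurent_one by simp
qed

lemma lKbin_span_1: "1 \<in> lKbin_span" using lKbin_span_lKbin_0[of 0] by simp

definition lKbin_recurrence_rest :: "int \<Rightarrow> nat \<Rightarrow> lpoly" where
  "lKbin_recurrence_rest c t = (if t \<ge> 2 then lKbin c (t - 2) else 0)"

lemma lKbin_recurrence: "lKbin (c + 2) t = lconst (qpow (int t) + qpow (- int t)) * lKbin (c + 1) t - lKbin c t + lKbin_recurrence_rest c t"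
proof (cases t)
  case 0 then show ?thesis using lKbin_recurrence_0[of c] by (simp add: lKbin_recurrence_rest_def)
next
  case (Suc s)
  show ?thesis
  proof (cases s)
    case 0 then show ?thesis using lKbin_recurrence_1[of c] Suc by (simp add: lKbin_recurrence_rest_def)
  next
    case (Suc r)
    then show ?thesis using lKbin_recurrence_Suc_Suc[of c r] \<open>t = Suc s\<close> by (simp add: lKbin_recurrence_rest_def add.commute)
  qed
qed

text \<open>Two-sided induction on c from c = 0, 1 along the recurrence, whose remainder has smaller t.\<close>

lemma lKbin_span_lKbin: "lKbin c t \<in> lKbin_span"
proof (induction t arbitrary: c rule: less_induct)
  case (less t)
  have R: "lKbin_recurrence_rest c t \<in> lKbin_span" for c
    using less by (auto simp: lKbin_recurrence_rest_def lKbin_span.zero)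
  let ?coef = "lconst (qpow (int t) + qpow (- int t))"
  have lc: "qpow (int t) + qpow (- int t) \<in> Laurent" by (intro Laurent_add Laurent_qpow)
  let ?P = "\<lambda>c. lKbin c t \<in> lKbin_span \<and> lKbin (c + 1) t \<in> lKbin_span"
  have base: "?P 0" using lKbin_span_lKbin_0 lKbin_span_lKbin_1 by simp
  have up: "?P (c + 1)" if h: "?P c" for c
  proof -
    have "lKbin (c + 2) t \<in> lKbin_span" unfolding lKbin_recurrence
      using h R lc by (intro lKbin_span.add lKbin_span_diff lKbin_span_smult) auto
    then show ?thesis using h by (simp add: add.assoc)
  qed
  have down: "?P c" if h: "?P (c + 1)" for c
  proof -
    have e: "lKbin c t = ?coef * lKbin (c + 1) t - lKbin (c + 2) t + lKbin_recurrence_rest c t"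
      using lKbin_recurrence[of c t] by (simp add: algebra_simps)
    have "lKbin c t \<in> lKbin_span" unfolding e
      using h R lc by (intro lKbin_span.add lKbin_span_diff lKbin_span_smult) (auto simp: add.assoc)
    then show ?thesis using h by simp
  qed
  have "?P c" by (rule int_induct_both_ways[of ?P 0 c, OF base up down])
  then show ?case by simp
qed

lemma lKbin_span_lK_mult: "f \<in> lKbin_span \<Longrightarrow> lK * f \<in> lKbin_span"
proof (induction f rule: lKbin_span.induct)
  case zero then show ?case by (simp add: lKbin_span.zero)
next
  case (base c t a)
  have "lK * (lconst a * lKbin c t) = lconst a * (lK * lKbin c t)" by (simp add: mult_ac)
  also have "\<dots> \<in> lKbin_span" unfolding lK_mult_lKbin
    using base by (intro lKbin_span_smult lKbin_span_diff lKbin_span_lKbin Laurent_qpow) auto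
  finally show ?case .
next
  case (add f g) then show ?case by (simp add: distrib_left lKbin_span.add)
qed

lemma lKbin_span_lKinv_mult: "f \<in> lKbin_span \<Longrightarrow> lKinv * f \<in> lKbin_span"
proof (induction f rule: lKbin_span.induct)
  case zero then show ?case by (simp add: lKbin_span.zero)
next
  case (base c t a)
  have "lKinv * (lconst a * lKbin c t) = lconst a * (lKinv * lKbin c t)" by (simp add: mult_ac)
  also have "\<dots> \<in> lKbin_span" unfolding lKinv_mult_lKbin
    using base by (intro lKbin_span_smult lKbin_span_diff lKbin_span_lKbin Laurent_qpow) auto
  finally show ?case .
next
  case (add f g) then show ?case by (simp add: distrib_left lKbin_span.add)
qed

lemma lKbin_Suc_shift: "lKbin (c + 1) (Suc s) = lconst (qpow (int s + 1)) * lKbin c (Suc s) + lconst (qpow (int s - c)) * (lKinv * lKbin c s)"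
proof -
  have "lconst (qpow (int s - c)) * (lKinv * lKbin c s) = lconst (qpow (int s - c) * qpow (c - int s)) * (lKbin (c + 1) (Suc s) - lconst (qpow (int s + 1)) * lKbin c (Suc s))"
    unfolding lKinv_mult_lKbin by (simp add: lconst_mult[symmetric] mult.assoc)
  also have "qpow (int s - c) * qpow (c - int s) = 1" by (simp add: qpow_add[symmetric])
  finally show ?thesis by simp
qed

text \<open>For c = c' - t the product is a q-binomial multiple of a single [K;c',t+s+1]; the shift
  identity lKbin_Suc_shift moves c up and down from there.\<close>

lemma lKbin_span_lKbin_mult: "lKbin c s * lKbin c' t \<in> lKbin_span"
proof (induction s arbitrary: c)
  case 0 then show ?case by (simp add: lKbin_span_lKbin)
next
  case (Suc s)
  let ?P = "\<lambda>c. lKbin c (Suc s) * lKbin c' t \<in> lKbin_span"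
  have base: "?P (c' - int t)"
  proof -
    have "lKbin c' t * lKbin (c' - int t) (Suc s) \<in> lKbin_span"
      unfolding lKbin_mult_shifted by (intro lKbin_span_smult lKbin_span_lKbin Laurent_qfact_ratio)
    then show ?thesis by (simp add: mult.commute)
  qed
  have up: "?P (c + 1)" if h: "?P c" for c
  proof -
    have "lKbin (c + 1) (Suc s) * lKbin c' t = lconst (qpow (int s + 1)) * (lKbin c (Suc s) * lKbin c' t) + lconst (qpow (int s - c)) * (lKinv * (lKbin c s * lKbin c' t))"
      unfolding lKbin_Suc_shift by (simp add: algebra_simps)
    also have "\<dots> \<in> lKbin_span" using h Suc.IH by (intro lKbin_span.add lKbin_span_smult lKbin_span_lKinv_mult Laurent_qpow)
    finally show ?thesis .
  qed
  have down: "?P c" if h: "?P (c + 1)" for c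
  proof -
    have "lKbin c (Suc s) * lKbin c' t = lconst (qpow (- (int s + 1))) * (lKbin (c + 1) (Suc s) * lKbin c' t - lconst (qpow (int s - c)) * (lKinv * (lKbin c s * lKbin c' t)))"
    proof -
      have "lconst (qpow (- (int s + 1))) * (lKbin (c + 1) (Suc s) * lKbin c' t - lconst (qpow (int s - c)) * (lKinv * (lKbin c s * lKbin c' t)))
          = lconst (qpow (- (int s + 1)) * qpow (int s + 1)) * (lKbin c (Suc s) * lKbin c' t)"
        unfolding lKbin_Suc_shift by (simp add: algebra_simps lconst_mult[symmetric])
      also have "qpow (- (int s + 1)) * qpow (int s + 1) = 1" by (simp add: qpow_add[symmetric])
      finally show ?thesis by simp
    qed
    also have "\<dots> \<in> lKbin_span" using h Suc.IH by (intro lKbin_span_diff lKbin_span_smult lKbin_span_lKinv_mult Laurent_qpow)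
    finally show ?thesis .
  qed
  show ?case by (rule int_induct_both_ways[of ?P "c' - int t" c, OF base up down])
qed

lemma lKbin_span_mult: "f \<in> lKbin_span \<Longrightarrow> g \<in> lKbin_span \<Longrightarrow> f * g \<in> lKbin_span"
proof (induction f rule: lKbin_span.induct)
  case zero then show ?case by (simp add: lKbin_span.zero)
next
  case (base c t a)
  from base.prems show ?case
  proof (induction g rule: lKbin_span.induct)
    case zero then show ?case by (simp add: lKbin_span.zero)
  next
    case (base c' t' b)
    have "lconst a * lKbin c t * (lconst b * lKbin c' t') = lconst (a * b) * (lKbin c t * lKbin c' t')"
      by (simp add: lconst_mult[symmetric] mult_ac)
    also have "\<dots> \<in> lKbin_span" using base.hyps(2) \<open>a \<in> Laurent\<close>
      by (intro lKbin_span_smult lKbin_span_lKbin_mult Laurent_mult)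
    finally show ?case .
  next
    case (add f g) then show ?case by (simp add: distrib_left lKbin_span.add)
  qed
next
  case (add f g) then show ?case by (simp add: distrib_right lKbin_span.add)
qed

lemma lKbin_span_twist: "f \<in> lKbin_span \<Longrightarrow> twist f \<in> lKbin_span"
proof (induction f rule: lKbin_span.induct)
  case zero then show ?case by (simp add: lKbin_span.zero)
next
  case (base c t a)
  then show ?case by (simp add: twist_mult twist_lKbin lKbin_span_smult lKbin_span_lKbin)
next
  case (add f g) then show ?case by (simp add: twist_add lKbin_span.add)
qed

lemma lKbin_span_twist_power: "f \<in> lKbin_span \<Longrightarrow> (twist ^^ n) f \<in> lKbin_span"
  by (induction n) (auto simp: lKbin_span_twist)

lemma lKbin_span_lK: "lK \<in> lKbin_span" using lKbin_span_lK_mult[OF lKbin_span_1] by simp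
lemma lKbin_span_lKinv: "lKinv \<in> lKbin_span" using lKbin_span_lKinv_mult[OF lKbin_span_1] by simp

section \<open>Spanning\<close>

definition A_span :: "'i set \<Rightarrow> ('i \<Rightarrow> falg) \<Rightarrow> falg set" where
  "A_span J b = {x. \<exists>S c. finite S \<and> S \<subseteq> J \<and> (\<forall>j\<in>S. c j \<in> Laurent) \<and>
        x - (\<Sum>j\<in>S. scal (c j) (b j)) \<in> relideal}"

lemma A_span_iff: "x \<in> A_span J b \<longleftrightarrow> (\<exists>S c. finite S \<and> S \<subseteq> J \<and> (\<forall>j\<in>S. c j \<in> Laurent) \<and>
        x \<doteq> (\<Sum>j\<in>S. scal (c j) (b j)))"
  by (simp add: A_span_def ueq_def)

lemma A_span_ueq: "x \<in> A_span J b \<Longrightarrow> y \<doteq> x \<Longrightarrow> y \<in> A_span J b"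
  unfolding A_span_iff using ueq_trans by blast

lemma ueq_A_span_trans [trans]: "y \<doteq> x \<Longrightarrow> x \<in> A_span J b \<Longrightarrow> y \<in> A_span J b"
  by (rule A_span_ueq)

lemma A_span_zero: "0 \<in> A_span J b"
  unfolding A_span_iff by (rule exI[of _ "{}"]) simp

lemma A_span_base: "j \<in> J \<Longrightarrow> b j \<in> A_span J b"
  unfolding A_span_iff by (intro exI[of _ "{j}"] exI[of _ "\<lambda>_. 1"]) (simp add: Laurent_one)

lemma sum_scal_restrict:
  assumes "finite S" "finite S'"
  shows "(\<Sum>j\<in>S \<union> S'. scal (if j \<in> S then c j else 0) (b j)) = (\<Sum>j\<in>S. scal (c j) (b j))"
proof -
  have "(\<Sum>j\<in>S \<union> S'. scal (if j \<in> S then c j else 0) (b j)) = (\<Sum>j\<in>S \<union> S'. if j \<in> S then scal (c j) (b j) else 0)"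
    by (rule sum.cong) auto
  also have "\<dots> = (\<Sum>j\<in>{x \<in> S \<union> S'. x \<in> S}. scal (c j) (b j))"
    by (rule sum.inter_filter[symmetric]) (use assms in simp)
  also have "{x \<in> S \<union> S'. x \<in> S} = S" by auto
  finally show ?thesis .
qed

lemma A_span_add: assumes "x \<in> A_span J b" "y \<in> A_span J b" shows "x + y \<in> A_span J b"
proof -
  from assms obtain S c S' c' where h: "finite S" "S \<subseteq> J" "\<forall>j\<in>S. c j \<in> Laurent" "x \<doteq> (\<Sum>j\<in>S. scal (c j) (b j))"
    "finite S'" "S' \<subseteq> J" "\<forall>j\<in>S'. c' j \<in> Laurent" "y \<doteq> (\<Sum>j\<in>S'. scal (c' j) (b j))"
    unfolding A_span_iff by blast
  define d where "d j = (if j \<in> S then c j else 0) + (if j \<in> S' then c' j else 0)" for j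
  have "(\<Sum>j\<in>S \<union> S'. scal (d j) (b j)) = (\<Sum>j\<in>S \<union> S'. scal (if j \<in> S then c j else 0) (b j))
      + (\<Sum>j\<in>S' \<union> S. scal (if j \<in> S' then c' j else 0) (b j))"
    by (simp add: d_def scal_add_left sum.distrib Un_commute)
  also have "\<dots> = (\<Sum>j\<in>S. scal (c j) (b j)) + (\<Sum>j\<in>S'. scal (c' j) (b j))"
    using h by (simp add: sum_scal_restrict)
  finally have e: "(\<Sum>j\<in>S \<union> S'. scal (d j) (b j)) = (\<Sum>j\<in>S. scal (c j) (b j)) + (\<Sum>j\<in>S'. scal (c' j) (b j))" .
  have "x + y \<doteq> (\<Sum>j\<in>S \<union> S'. scal (d j) (b j))" unfolding e using h by (intro ueq_add)
  moreover have "\<forall>j\<in>S \<union> S'. d j \<in> Laurent" using h by (auto simp: d_def intro!: Laurent_add Laurent_zero)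
  ultimately show ?thesis unfolding A_span_iff using h by (intro exI[of _ "S \<union> S'"] exI[of _ d]) auto
qed

lemma A_span_smult: assumes "a \<in> Laurent" "x \<in> A_span J b" shows "scal a x \<in> A_span J b"
proof -
  from assms obtain S c where h: "finite S" "S \<subseteq> J" "\<forall>j\<in>S. c j \<in> Laurent" "x \<doteq> (\<Sum>j\<in>S. scal (c j) (b j))"
    unfolding A_span_iff by blast
  have "scal a x \<doteq> (\<Sum>j\<in>S. scal (a * c j) (b j))"
    using ueq_scal[OF h(4), of a] by (simp add: scal_sum_right scal_scal)
  then show ?thesis unfolding A_span_iff using h assms(1)
    by (intro exI[of _ S] exI[of _ "\<lambda>j. a * c j"]) (auto intro: Laurent_mult)
qed

lemma A_span_sum: "(\<And>i. i \<in> I \<Longrightarrow> f i \<in> A_span J b) \<Longrightarrow> sum f I \<in> A_span J b"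
  by (induction I rule: infinite_finite_induct) (auto intro: A_span_zero A_span_add)

lemma A_span_left_mult:
  assumes "\<And>j. j \<in> J \<Longrightarrow> g * b j \<in> A_span J b" "x \<in> A_span J b"
  shows "g * x \<in> A_span J b"
proof -
  from assms(2) obtain S c where h: "finite S" "S \<subseteq> J" "\<forall>j\<in>S. c j \<in> Laurent" "x \<doteq> (\<Sum>j\<in>S. scal (c j) (b j))"
    unfolding A_span_iff by blast
  have "g * x \<doteq> (\<Sum>j\<in>S. scal (c j) (g * b j))"
    using ueq_mult_left[OF h(4), of g] by (simp add: sum_distrib_left scal_mult_right)
  moreover have "(\<Sum>j\<in>S. scal (c j) (g * b j)) \<in> A_span J b"
    using h assms(1) by (intro A_span_sum A_span_smult) auto
  ultimately show ?thesis using A_span_ueq by blast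
qed

lemma Asubalg_A_span:
  assumes one: "1 \<in> A_span J b" and gen: "\<And>g x. g \<in> G \<Longrightarrow> x \<in> A_span J b \<Longrightarrow> g * x \<in> A_span J b"
  shows "x \<in> Asubalg G \<Longrightarrow> x \<in> A_span J b"
proof -
  have "\<forall>y \<in> A_span J b. x * y \<in> A_span J b" if "x \<in> Asubalg G" for x
    using that
  proof (induction x rule: Asubalg.induct)
    case one then show ?case by simp
  next
    case (gen g) then show ?case using assms(2) by blast
  next
    case (add x y) then show ?case by (simp add: distrib_right A_span_add)
  next
    case (mult x y) then show ?case by (simp add: mult.assoc)
  next
    case (smult a x) then show ?case by (simp add: scal_mult_left A_span_smult)
  qed
  then show "x \<in> Asubalg G \<Longrightarrow> x \<in> A_span J b" using one by fastforce
qed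

lemma in_Asubalg_A_span:
  assumes "1 \<in> A_span J b" "\<And>g x. g \<in> G \<Longrightarrow> x \<in> A_span J b \<Longrightarrow> g * x \<in> A_span J b" "in_Asubalg G x"
  shows "x \<in> A_span J b"
proof -
  from assms(3) obtain y where "y \<in> Asubalg G" "x - y \<in> relideal" unfolding in_Asubalg_def by blast
  then show ?thesis using Asubalg_A_span[OF assms(1,2)] A_span_ueq unfolding ueq_def by blast
qed

definition cartan_index :: "(int \<times> nat) set" where "cartan_index = {(c, t). c = 0 \<or> (c = 1 \<and> t \<ge> 1)}"
definition cartan_basis :: "int \<times> nat \<Rightarrow> falg" where "cartan_basis = (\<lambda>(c, t). Kbin c t)"

lemma evalK_cartan_span: "f \<in> lKbin_span \<Longrightarrow> evalK f \<in> A_span cartan_index cartan_basis"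
proof (induction f rule: lKbin_span.induct)
  case zero then show ?case by (simp add: A_span_zero)
next
  case (base c t a)
  have "cartan_basis (c, t) \<in> A_span cartan_index cartan_basis" using base by (intro A_span_base) (auto simp: cartan_index_def)
  then have "scal a (Kbin c t) \<in> A_span cartan_index cartan_basis" using base by (intro A_span_smult) (auto simp: cartan_basis_def)
  moreover have "evalK (lconst a * lKbin c t) \<doteq> scal a (Kbin c t)"
    unfolding evalK_lconst_mult by (rule ueq_scal[OF evalK_lKbin])
  ultimately show ?case using A_span_ueq by blast
next
  case (add f g) then show ?case by (simp add: evalK_add A_span_add)
qed

lemma cartan_gen_evalK: "g \<in> {K, Ki} \<union> range (Kbin 0) \<Longrightarrow> \<exists>h\<in>lKbin_span. g \<doteq> evalK h"
proof -
  assume "g \<in> {K, Ki} \<union> range (Kbin 0)"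
  then consider "g = K" | "g = Ki" | s where "g = Kbin 0 s" by blast
  then show ?thesis
  proof cases
    case 1 then show ?thesis using lKbin_span_lK by (intro bexI[of _ lK]) (auto simp: evalK_lK)
  next
    case 2 then show ?thesis using lKbin_span_lKinv by (intro bexI[of _ lKinv]) (auto simp: evalK_lKinv)
  next
    case 3 then show ?thesis using lKbin_span_lKbin_0 evalK_lKbin by (intro bexI[of _ "lKbin 0 s"]) (auto intro: ueq_sym)
  qed
qed

lemma cartan_spanning: "in_Asubalg U0A_gens x \<Longrightarrow> x \<in> A_span cartan_index cartan_basis"
proof (rule in_Asubalg_A_span)
  show "1 \<in> A_span cartan_index cartan_basis" using evalK_cartan_span[OF lKbin_span_1] by simp
next
  fix g x assume g: "g \<in> U0A_gens" and x: "x \<in> A_span cartan_index cartan_basis"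
  from g obtain h where h: "h \<in> lKbin_span" "g \<doteq> evalK h" using cartan_gen_evalK unfolding U0A_gens_def by blast
  show "g * x \<in> A_span cartan_index cartan_basis"
  proof (rule A_span_left_mult[OF _ x])
    fix j assume "j \<in> cartan_index"
    obtain c t where j: "j = (c, t)" by (cases j)
    have "g * cartan_basis j \<doteq> evalK h * evalK (lKbin c t)"
      unfolding j cartan_basis_def by (simp add: ueq_mult h(2) ueq_sym[OF evalK_lKbin])
    also have "\<dots> \<doteq> evalK (h * lKbin c t)" by (rule ueq_sym[OF evalK_mult])
    finally show "g * cartan_basis j \<in> A_span cartan_index cartan_basis" using evalK_cartan_span[OF lKbin_span_mult[OF h(1) lKbin_span_lKbin]] A_span_ueq by blast
  qed
qed

definition pbw_index :: "(nat \<times> nat \<times> nat \<times> int) set" where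
  "pbw_index = {(a, b, t, c). c = 0 \<or> c = int (min 1 t)}"
definition pbw_basis :: "nat \<times> nat \<times> nat \<times> int \<Rightarrow> falg" where
  "pbw_basis = (\<lambda>(a, b, t, c). Fdiv a * Kbin c t * Ediv b)"

definition pbw_term :: "nat \<Rightarrow> lpoly \<Rightarrow> nat \<Rightarrow> falg" where
  "pbw_term a f b = Fdiv a * evalK f * Ediv b"

lemma pbw_term_A_span: "f \<in> lKbin_span \<Longrightarrow> pbw_term a f b \<in> A_span pbw_index pbw_basis"
proof (induction f rule: lKbin_span.induct)
  case zero then show ?case by (simp add: A_span_zero pbw_term_def)
next
  case (base c t x)
  have "pbw_basis (a, b, t, c) \<in> A_span pbw_index pbw_basis" using base by (intro A_span_base) (auto simp: pbw_index_def)
  then have "scal x (Fdiv a * Kbin c t * Ediv b) \<in> A_span pbw_index pbw_basis" using base by (intro A_span_smult) (auto simp: pbw_basis_def)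
  moreover have "pbw_term a (lconst x * lKbin c t) b \<doteq> scal x (Fdiv a * Kbin c t * Ediv b)"
    unfolding pbw_term_def evalK_lconst_mult scal_mult_left scal_mult_right
    by (intro ueq_scal ueq_mult_right ueq_mult_left evalK_lKbin)
  ultimately show ?case using A_span_ueq by blast
next
  case (add f g) then show ?case by (simp add: pbw_term_def evalK_add distrib_left distrib_right A_span_add)
qed

lemma evalK_pbw_term: "h \<in> lKbin_span \<Longrightarrow> f \<in> lKbin_span \<Longrightarrow> evalK h * pbw_term a f b \<in> A_span pbw_index pbw_basis"
proof -
  assume h: "h \<in> lKbin_span" and f: "f \<in> lKbin_span"
  have "evalK h * pbw_term a f b = (evalK h * Fdiv a) * evalK f * Ediv b" by (simp add: pbw_term_def mult.assoc)
  also have "\<dots> \<doteq> (Fdiv a * evalK ((twist ^^ a) h)) * evalK f * Ediv b"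
    by (intro ueq_mult_right evalK_Fdiv)
  also have "\<dots> = Fdiv a * (evalK ((twist ^^ a) h) * evalK f) * Ediv b" by (simp add: mult.assoc)
  also have "\<dots> \<doteq> Fdiv a * evalK ((twist ^^ a) h * f) * Ediv b"
    by (intro ueq_mult_right ueq_mult_left ueq_sym[OF evalK_mult])
  finally show ?thesis using pbw_term_A_span[OF lKbin_span_mult[OF lKbin_span_twist_power[OF h] f]] A_span_ueq unfolding pbw_term_def by blast
qed

lemma Fdiv_pbw_term: "f \<in> lKbin_span \<Longrightarrow> Fdiv n * pbw_term a f b \<in> A_span pbw_index pbw_basis"
proof -
  assume f: "f \<in> lKbin_span"
  have "Fdiv n * pbw_term a f b = scal (qfact (n + a) / (qfact n * qfact a)) (pbw_term (n + a) f b)"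
    by (simp add: pbw_term_def mult.assoc[symmetric] Fdiv_mult scal_mult_left)
  then show ?thesis using f by (simp add: A_span_smult pbw_term_A_span Laurent_qfact_ratio)
qed

lemma pbw_term_mult_pbw_term_0:
  assumes "g \<in> lKbin_span" "f \<in> lKbin_span"
  shows "pbw_term a g k * pbw_term 0 f b \<in> A_span pbw_index pbw_basis"
proof -
  have "pbw_term a g k * pbw_term 0 f b = Fdiv a * evalK g * (Ediv k * evalK f) * Ediv b"
    by (simp add: pbw_term_def mult.assoc)
  also have "\<dots> \<doteq> Fdiv a * evalK g * (evalK ((twist ^^ k) f) * Ediv k) * Ediv b"
    by (intro ueq_mult_right ueq_mult_left Ediv_evalK)
  also have "\<dots> = Fdiv a * (evalK g * evalK ((twist ^^ k) f)) * (Ediv k * Ediv b)"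
    by (simp add: mult.assoc)
  also have "\<dots> \<doteq> Fdiv a * evalK (g * (twist ^^ k) f) * (Ediv k * Ediv b)"
    by (intro ueq_mult_right ueq_mult_left ueq_sym[OF evalK_mult])
  also have "\<dots> = scal (qfact (k + b) / (qfact k * qfact b)) (pbw_term a (g * (twist ^^ k) f) (k + b))"
    by (simp add: Ediv_mult pbw_term_def scal_mult_right)
  also have "\<dots> \<in> A_span pbw_index pbw_basis"
    using assms by (intro A_span_smult Laurent_qfact_ratio pbw_term_A_span lKbin_span_mult lKbin_span_twist_power)
  finally show ?thesis .
qed

lemma Ediv_pbw_term:
  assumes "f \<in> lKbin_span"
  shows "Ediv n * pbw_term a f b \<in> A_span pbw_index pbw_basis"
proof -
  have "Ediv n * pbw_term a f b = (Ediv n * Fdiv_int (int a)) * pbw_term 0 f b"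
    by (simp add: pbw_term_def mult.assoc)
  also have "\<dots> \<doteq> EF_sum n (int a) * pbw_term 0 f b" by (intro ueq_mult_right Ediv_Fdiv_int)
  also have "\<dots> = (\<Sum>j\<le>n. Fdiv_int (int a - int j) * evalK (lKbin (2 * int j - int n - int a) j) * Ediv (n - j)
      * pbw_term 0 f b)"
    by (simp add: EF_sum_def sum_distrib_right)
  also have "\<dots> \<in> A_span pbw_index pbw_basis"
  proof (rule A_span_sum)
    fix j
    let ?k = "lKbin (2 * int j - int n - int a) j"
    show "Fdiv_int (int a - int j) * evalK ?k * Ediv (n - j) * pbw_term 0 f b \<in> A_span pbw_index pbw_basis"
    proof (cases "j \<le> a")
      case True
      then have "Fdiv_int (int a - int j) = Fdiv (a - j)" by (metis Fdiv_int_nat of_nat_diff)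
      then have "Fdiv_int (int a - int j) * evalK ?k * Ediv (n - j) = pbw_term (a - j) ?k (n - j)"
        by (simp add: pbw_term_def)
      then show ?thesis using pbw_term_mult_pbw_term_0[OF lKbin_span_lKbin assms] by simp
    qed (simp add: Fdiv_int_neg A_span_zero)
  qed
  finally show ?thesis .
qed

lemma pbw_basis_pbw_term: "pbw_basis (a, b, t, c) \<doteq> pbw_term a (lKbin c t) b"
  unfolding pbw_basis_def pbw_term_def by (simp add: ueq_mult_right ueq_mult_left ueq_sym[OF evalK_lKbin])

lemma pbw_spanning: "in_Asubalg UA_gens x \<Longrightarrow> x \<in> A_span pbw_index pbw_basis"
proof (rule in_Asubalg_A_span)
  show "1 \<in> A_span pbw_index pbw_basis" using pbw_term_A_span[OF lKbin_span_1, of 0 0] by (simp add: pbw_term_def)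
next
  fix g x assume g: "g \<in> UA_gens" and x: "x \<in> A_span pbw_index pbw_basis"
  have key: "g * pbw_term a f b \<in> A_span pbw_index pbw_basis" if "f \<in> lKbin_span" for a f b
  proof -
    from g consider n where "g = Ediv n" | n where "g = Fdiv n" | "g \<in> {K, Ki} \<union> range (Kbin 0)"
      unfolding UA_gens_def by blast
    then show ?thesis
    proof cases
      case 1 then show ?thesis using Ediv_pbw_term[OF that] by simp
    next
      case 2 then show ?thesis using Fdiv_pbw_term[OF that] by simp
    next
      case 3
      then obtain h where h: "h \<in> lKbin_span" "g \<doteq> evalK h" using cartan_gen_evalK by blast
      then show ?thesis using evalK_pbw_term[OF h(1) that] A_span_ueq ueq_mult_right by blast
    qed
  qed
  show "g * x \<in> A_span pbw_index pbw_basis"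
  proof (rule A_span_left_mult[OF _ x])
    fix j assume "j \<in> pbw_index"
    obtain a b t c where j: "j = (a, b, t, c)" by (cases j)
    have "g * pbw_basis j \<doteq> g * pbw_term a (lKbin c t) b" unfolding j by (intro ueq_mult_left pbw_basis_pbw_term)
    then show "g * pbw_basis j \<in> A_span pbw_index pbw_basis" using key[OF lKbin_span_lKbin] A_span_ueq by blast
  qed
qed

section \<open>A representation of U_q(sl_2) on functions Z^3 -> Q(q)\<close>

text \<open>The left regular representation in coordinates: v a n b is the coefficient of F^a K^n E^b, and
  opE comes from E F^a = F^a E + {a} F^(a-1) [K;1-a]. Letting a and b range over all integers
  avoids boundary cases.\<close>

type_synonym vfun = "int \<Rightarrow> int \<Rightarrow> int \<Rightarrow> qf"

definition vadd :: "vfun \<Rightarrow> vfun \<Rightarrow> vfun" where "vadd u v = (\<lambda>a n b. u a n b + v a n b)"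
definition vscale :: "qf \<Rightarrow> vfun \<Rightarrow> vfun" where "vscale c u = (\<lambda>a n b. c * u a n b)"
definition vzero :: vfun where "vzero = (\<lambda>a n b. 0)"

definition vlinear :: "(vfun \<Rightarrow> vfun) \<Rightarrow> bool" where
  "vlinear h \<longleftrightarrow> (\<forall>u v. h (vadd u v) = vadd (h u) (h v)) \<and> (\<forall>c u. h (vscale c u) = vscale c (h u))"

definition opF :: "vfun \<Rightarrow> vfun" where "opF v = (\<lambda>a n b. v (a - 1) n b)"
definition opK :: "vfun \<Rightarrow> vfun" where "opK v = (\<lambda>a n b. qpow (-2 * a) * v a (n - 1) b)"
definition opKi :: "vfun \<Rightarrow> vfun" where "opKi v = (\<lambda>a n b. qpow (2 * a) * v a (n + 1) b)"
definition opE :: "vfun \<Rightarrow> vfun" where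
  "opE v = (\<lambda>a n b. qpow (-2 * n) * v a n (b - 1)
      + qint (a + 1) / qdiff * (qpow (- a) * v (a + 1) (n - 1) b - qpow a * v (a + 1) (n + 1) b))"

fun gen_op :: "gen \<Rightarrow> vfun \<Rightarrow> vfun" where
  "gen_op GE = opE" | "gen_op GF = opF" | "gen_op GK = opK" | "gen_op GKi = opKi"

fun word_op :: "word \<Rightarrow> vfun \<Rightarrow> vfun" where
  "word_op (Word gs) = foldr (\<lambda>g h. gen_op g \<circ> h) gs id"

definition rep :: "falg \<Rightarrow> vfun \<Rightarrow> vfun" where
  "rep x v = (\<lambda>a n b. \<Sum>w\<in>keys x. lookup x w * word_op w v a n b)"

lemma vlinear_gen_op: "vlinear (gen_op g)"
  by (cases g) (simp_all add: vlinear_def vadd_def vscale_def opF_def opK_def opKi_def opE_def algebra_simps)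

lemma vlinear_comp: "vlinear f \<Longrightarrow> vlinear g \<Longrightarrow> vlinear (f \<circ> g)" by (simp add: vlinear_def)
lemma vlinear_word_op: "vlinear (word_op w)"
proof (cases w)
  case (Word gs)
  show ?thesis unfolding Word word_op.simps
  proof (induction gs)
    case Nil then show ?case by (simp add: vlinear_def)
  next
    case (Cons g gs)
    have eq: "foldr (\<lambda>g h. gen_op g \<circ> h) (g # gs) id = gen_op g \<circ> foldr (\<lambda>g h. gen_op g \<circ> h) gs id" by simp
    show ?case unfolding eq by (rule vlinear_comp[OF vlinear_gen_op Cons.IH])
  qed
qed

lemma vlinear_zero: "vlinear h \<Longrightarrow> h vzero = vzero"
proof -
  assume "vlinear h"
  then have "h (vscale 0 vzero) = vscale 0 (h vzero)" by (simp add: vlinear_def)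
  moreover have "vscale 0 u = vzero" for u by (simp add: vscale_def vzero_def)
  ultimately show ?thesis by simp
qed

lemma foldr_gen_op_comp: "foldr (\<lambda>g h. gen_op g \<circ> h) xs z = foldr (\<lambda>g h. gen_op g \<circ> h) xs id \<circ> z"
  by (induction xs) auto

lemma word_op_plus: "word_op (w + w') = word_op w \<circ> word_op w'"
  by (cases w; cases w') (simp add: foldr_gen_op_comp[of _ "foldr _ _ id"])

lemma word_op_0: "word_op 0 = id" by (simp add: zero_word_def)

lemma rep_superset: "finite S \<Longrightarrow> keys x \<subseteq> S \<Longrightarrow> rep x v = (\<lambda>a n b. \<Sum>w\<in>S. lookup x w * word_op w v a n b)"
  unfolding rep_def by (intro ext sum.mono_neutral_left) (auto simp: in_keys_iff)

lemma rep_add: "rep (x + y) v = vadd (rep x v) (rep y v)"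
proof -
  let ?S = "keys x \<union> keys y"
  have "keys (x + y) \<subseteq> ?S" by (rule keys_add)
  then show ?thesis
    by (subst (1 2 3) rep_superset[of ?S]) (auto simp: vadd_def lookup_add distrib_right sum.distrib)
qed

lemma rep_zero: "rep 0 v = vzero" by (simp add: rep_def vzero_def)

lemma rep_single: "rep (single w c) v = vscale c (word_op w v)"
  by (subst rep_superset[of "{w}"]) (auto simp: vscale_def lookup_single_if when_def)

lemma vlinear_rep: "vlinear (rep x)"
  unfolding vlinear_def rep_def vadd_def vscale_def
  using vlinear_word_op unfolding vlinear_def vadd_def vscale_def
  by (auto simp: fun_eq_iff distrib_left sum.distrib sum_distrib_left mult_ac)

lemma rep_mult: "rep (x * y) v = rep x (rep y v)"
proof (induction x arbitrary: v rule: poly_mapping_induct)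
  case zero then show ?case by (simp add: rep_zero)
next
  case (single w c x)
  have "rep (single w c * y) v = rep (single w c) (rep y v)" for v
  proof (induction y arbitrary: v rule: poly_mapping_induct)
    case zero then show ?case using vlinear_zero[OF vlinear_rep] by (simp add: rep_zero)
  next
    case (single w' d y)
    have "rep (single w c * single w' d) v = vscale c (word_op w (vscale d (word_op w' v)))"
      using vlinear_word_op[of w] by (simp add: mult_single rep_single word_op_plus vlinear_def vscale_def mult_ac)
    then show ?case using single vlinear_rep[of "single w c"]
      by (simp add: distrib_left rep_add rep_single vlinear_def)
  qed
  then show ?case using single by (simp add: distrib_right rep_add)
qed

lemma rep_1: "rep 1 v = v"
  using rep_single[of 0 1 v] by (simp add: word_op_0 vscale_def)

lemma rep_scal: "rep (scal c x) v = vscale c (rep x v)"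
  by (simp add: scal_def rep_mult rep_single word_op_0)

lemma rep_gen: "rep (gen_el g) v = gen_op g v"
  by (simp add: gen_el_def rep_single vscale_def)

lemma rep_diff: "rep (x - y) v = (\<lambda>a n b. rep x v a n b - rep y v a n b)"
proof -
  have "rep x v = vadd (rep (x - y) v) (rep y v)" using rep_add[of "x - y" y v] by simp
  then show ?thesis by (auto simp: vadd_def fun_eq_iff)
qed

lemma rep_sum: "rep (sum h S) v = (\<lambda>a n b. \<Sum>i\<in>S. rep (h i) v a n b)"
  by (induction S rule: infinite_finite_induct) (auto simp: rep_zero vzero_def rep_add vadd_def)

lemma qint_succ: "qint (a + 1) = inverse qq * qint a + qpow a"
  using qint_add[of a 1] by (simp add: qpow_minus)

lemma qint_qdiff: "qint a * (qq - inverse qq) = qpow a - qpow (- a)"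
  using qdiff_nz by (simp add: qint_qpow qdiff_def)

lemma qint_Suc_qpow_neg: "qint (a + 1) * qpow (- a) - qint a * qpow (- (a - 1)) = qpow (- 2 * a)"
proof -
  have e1: "qpow (- (a - 1)) = qq * qpow (- a)" by (simp add: qpow_diff qpow_minus field_simps)
  have e2: "qpow a * qpow (- a) = 1" by (simp add: qpow_add[symmetric])
  have e3: "qpow (- 2 * a) = qpow (- a) * qpow (- a)" by (simp add: qpow_add[symmetric])
  have "qint (a + 1) * qpow (- a) - qint a * qpow (- (a - 1)) = 1 - qpow (- a) * (qint a * (qq - inverse qq))"
    unfolding qint_succ e1 using e2 by (simp add: algebra_simps)
  also have "\<dots> = qpow (- 2 * a)" unfolding qint_qdiff e3 using e2 by (simp add: algebra_simps)
  finally show ?thesis .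
qed

lemma qint_Suc_qpow: "qint (a + 1) * qpow a - qint a * qpow (a - 1) = qpow (2 * a)"
proof -
  have e1: "qpow (a - 1) = inverse qq * qpow a" by (simp add: qpow_diff field_simps)
  have e3: "qpow (2 * a) = qpow a * qpow a" by (simp add: qpow_add[symmetric])
  show ?thesis unfolding qint_succ e1 e3 by (simp add: algebra_simps)
qed

lemma inverse_qpow_cancel [simp]: "inverse (qpow x) * (qpow x * y) = y" "qpow x * (inverse (qpow x) * y) = y"
  by (simp_all add: mult.assoc[symmetric])

lemma rep_E_F_commutator: "rep (E * F - F * E - scal (inverse (qq - inverse qq)) (K - Ki)) v = vzero"
proof (intro ext)
  fix a n b
  have "rep (E * F - F * E - scal (inverse (qq - inverse qq)) (K - Ki)) v a n b
      = (v a (n - 1) b * (qint (a + 1) * qpow (- a) - qint a * qpow (- (a - 1)))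
        - v a (n + 1) b * (qint (a + 1) * qpow a - qint a * qpow (a - 1))
        - (qpow (- 2 * a) * v a (n - 1) b - qpow (2 * a) * v a (n + 1) b)) / qdiff"
    unfolding qdiff_def[symmetric]
    by (simp add: rep_diff rep_add vadd_def rep_mult rep_gen rep_scal vscale_def opK_def opKi_def opF_def opE_def
        field_simps)
  also have "\<dots> = 0" unfolding qint_Suc_qpow_neg qint_Suc_qpow by (simp add: algebra_simps)
  finally show "rep (E * F - F * E - scal (inverse (qq - inverse qq)) (K - Ki)) v a n b = vzero a n b"
    by (simp add: vzero_def)
qed

lemma rep_rels: "r \<in> rels \<Longrightarrow> rep r v = vzero"
proof -
  assume "r \<in> rels"
  then consider "r = K * Ki - 1" | "r = Ki * K - 1" | "r = K * E * Ki - scal (qq ^ 2) E"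
    | "r = K * F * Ki - scal (inverse (qq ^ 2)) F"
    | "r = E * F - F * E - scal (inverse (qq - inverse qq)) (K - Ki)"
    unfolding rels_def by blast
  then show ?thesis
  proof cases
    case 1 show ?thesis unfolding 1
      by (simp add: rep_diff rep_mult rep_gen rep_1 vzero_def opK_def opKi_def qpow_minus)
  next
    case 2 show ?thesis unfolding 2
      by (simp add: rep_diff rep_mult rep_gen rep_1 vzero_def opK_def opKi_def qpow_minus)
  next
    case 3 show ?thesis unfolding 3
      by (simp add: rep_diff rep_mult rep_gen rep_scal vzero_def vscale_def opK_def opKi_def opE_def
          qpow_add qpow_diff qpow_minus qpow_double field_simps power2_eq_square)
  next
    case 4 show ?thesis unfolding 4
      by (simp add: rep_diff rep_mult rep_gen rep_scal vzero_def vscale_def opK_def opKi_def opF_def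
          qpow_add qpow_diff qpow_minus qpow_double field_simps power2_eq_square)
  next
    case 5 show ?thesis unfolding 5 by (rule rep_E_F_commutator)
  qed
qed

lemma rep_relideal: "x \<in> relideal \<Longrightarrow> rep x v = vzero"
proof (induction x arbitrary: v rule: relideal.induct)
  case zero then show ?case by (simp add: rep_zero)
next
  case (gen r a b)
  then show ?case by (simp add: rep_mult rep_rels vlinear_zero[OF vlinear_rep])
next
  case (add x y) then show ?case by (simp add: rep_add vadd_def vzero_def)
qed

lemma rep_ueq: "x \<doteq> y \<Longrightarrow> rep x v = rep y v"
  unfolding ueq_def using rep_relideal[of "x - y" v] by (auto simp: rep_diff vzero_def fun_eq_iff)

text \<open>The vector F^a f(K) E^b.\<close>

definition slice :: "int \<Rightarrow> lpoly \<Rightarrow> int \<Rightarrow> vfun" where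
  "slice a' f b' = (\<lambda>a n b. if a = a' \<and> b = b' then lookup f n else 0)"

lemma opE_slice_0: "opE (slice 0 f b') = slice 0 (twist f) (b' + 1)"
  by (auto simp: opE_def slice_def lookup_twist fun_eq_iff)

lemma opK_slice_0: "opK (slice 0 f b') = slice 0 (lK * f) b'"
  by (auto simp: opK_def slice_def fun_eq_iff mult.commute[of lK] lookup_mult_single)

lemma opKi_slice_0: "opKi (slice 0 f b') = slice 0 (lKinv * f) b'"
  by (auto simp: opKi_def slice_def fun_eq_iff mult.commute[of lKinv] lookup_mult_single)

lemma opF_slice: "opF (slice a' f b') = slice (a' + 1) f b'"
  by (auto simp: opF_def slice_def fun_eq_iff)

lemma rep_E_power_slice: "rep (E ^ m) (slice 0 f b') = slice 0 ((twist ^^ m) f) (b' + int m)"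
proof (induction m)
  case 0 then show ?case by (simp add: rep_1)
next
  case (Suc m)
  then show ?case by (simp add: rep_mult rep_gen opE_slice_0 ac_simps)
qed

lemma rep_F_power_slice: "rep (F ^ m) (slice a' f b') = slice (a' + int m) f b'"
proof (induction m)
  case 0 then show ?case by (simp add: rep_1)
next
  case (Suc m)
  then show ?case by (simp add: rep_mult rep_gen opF_slice ac_simps)
qed

lemma lK_power: "lK ^ k = single (int k) 1"
  by (induction k) (simp_all add: mult_single add.commute)

lemma lKinv_power: "lKinv ^ k = single (- int k) 1"
  by (induction k) (simp_all add: mult_single add.commute)

lemma rep_K_power_slice: "rep (K ^ k) (slice 0 f b') = slice 0 (lK ^ k * f) b'"
  by (induction k) (simp_all add: rep_1 rep_mult rep_gen opK_slice_0 mult.assoc)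

lemma rep_Kinv_power_slice: "rep (Ki ^ k) (slice 0 f b') = slice 0 (lKinv ^ k * f) b'"
  by (induction k) (simp_all add: rep_1 rep_mult rep_gen opKi_slice_0 mult.assoc)

lemma rep_Kpow_slice: "rep (Kpow m) (slice 0 f b') = slice 0 (single m 1 * f) b'"
proof (cases "m \<ge> 0")
  case True
  then obtain k where "m = int k" by (metis nonneg_eq_int)
  then show ?thesis by (simp add: Kpow_nat rep_K_power_slice lK_power)
next
  case False
  then obtain k where "m = - int k" by (intro that[of "nat (- m)"]) simp
  then show ?thesis by (simp add: Kpow_neg rep_Kinv_power_slice lKinv_power)
qed

lemma lconst_mult_single: "lconst c * single m 1 = single m c"
  by (simp add: lconst_def mult_single)

lemma rep_evalK_slice: "rep (evalK g) (slice 0 f b') = slice 0 (g * f) b'"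
proof -
  have "rep (evalK g) (slice 0 f b') = (\<lambda>a n b. \<Sum>m\<in>keys g. lookup g m * slice 0 (single m 1 * f) b' a n b)"
    by (simp add: evalK_def rep_sum rep_scal vscale_def rep_Kpow_slice)
  also have "\<dots> = slice 0 (g * f) b'"
  proof (rule ext, rule ext, rule ext)
    fix a n b
    have "(\<Sum>m\<in>keys g. lookup g m * lookup (single m 1 * f) n) = lookup ((\<Sum>m\<in>keys g. single m (lookup g m)) * f) n"
      by (simp add: sum_distrib_right lookup_sum lookup_lconst_mult[symmetric] mult.assoc[symmetric] lconst_mult_single)
    then show "(\<Sum>m\<in>keys g. lookup g m * slice 0 (single m 1 * f) b' a n b) = slice 0 (g * f) b' a n b"
      by (cases "a = 0 \<and> b = b'") (auto simp: slice_def poly_mapping_sum_single[of g, symmetric])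
  qed
  finally show ?thesis .
qed

lemma twist_power_1: "(twist ^^ m) 1 = 1" by (induction m) auto

lemma rep_vscale: "rep x (vscale c v) = vscale c (rep x v)"
  using vlinear_rep[of x] by (simp add: vlinear_def)

lemma rep_pbw_term_vacuum: "rep (Fdiv a * evalK g * Ediv b) (slice 0 1 0) = vscale (inverse (qfact a) * inverse (qfact b)) (slice (int a) g (int b))"
proof -
  have "rep (Ediv b) (slice 0 1 0) = vscale (inverse (qfact b)) (slice 0 1 (int b))"
    by (simp add: Ediv_def rep_scal rep_E_power_slice twist_power_1)
  then have B: "rep (evalK g * Ediv b) (slice 0 1 0) = vscale (inverse (qfact b)) (slice 0 g (int b))"
    by (simp only: rep_mult rep_vscale rep_evalK_slice mult_1_right)
  have "rep (Fdiv a * evalK g * Ediv b) (slice 0 1 0) = vscale (inverse (qfact a)) (vscale (inverse (qfact b)) (rep (F ^ a) (slice 0 g (int b))))"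
  proof -
    have "rep (Fdiv a * evalK g * Ediv b) (slice 0 1 0) = rep (Fdiv a) (rep (evalK g * Ediv b) (slice 0 1 0))"
      by (simp only: mult.assoc[of "Fdiv a"] rep_mult[of "Fdiv a" "evalK g * Ediv b"])
    then show ?thesis by (simp only: B Fdiv_def rep_scal rep_vscale) (simp add: vscale_def mult_ac)
  qed
  also have "\<dots> = vscale (inverse (qfact a) * inverse (qfact b)) (slice (int a) g (int b))"
    by (simp add: rep_F_power_slice vscale_def mult.assoc)
  finally show ?thesis .
qed

section \<open>Linear independence\<close>

definition lKprod :: "int \<Rightarrow> nat \<Rightarrow> lpoly" where "lKprod c t = (\<Prod>i<t. lKbr (c - int i))"

lemma lookup_mult_lKbr: "lookup (f * lKbr x) n = lookup f (n - 1) * (qpow x / qdiff) - lookup f (n + 1) * (qpow (- x) / qdiff)"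
  by (simp add: lKbr_def right_diff_distrib lookup_minus lookup_mult_single)

lemma lookup_one: "lookup (1 :: lpoly) n = (if n = 0 then 1 else 0)"
  using lookup_lconst[of 1 n] by simp

lemma lookup_lKprod_extreme:
  "(\<forall>n. int t < \<bar>n\<bar> \<longrightarrow> lookup (lKprod c t) n = 0) \<and>
   lookup (lKprod c t) (int t) = (\<Prod>i<t. qpow (c - int i) / qdiff) \<and>
   lookup (lKprod c t) (- int t) = (\<Prod>i<t. - (qpow (- (c - int i)) / qdiff))"
proof (induction t)
  case 0 then show ?case by (simp add: lKprod_def lookup_one)
next
  case (Suc t)
  have P: "lKprod c (Suc t) = lKprod c t * lKbr (c - int t)" by (simp add: lKprod_def)
  have v: "lookup (lKprod c t) m = 0" if "int t < \<bar>m\<bar>" for m using Suc.IH that by blast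
  have A: "\<forall>n. int (Suc t) < \<bar>n\<bar> \<longrightarrow> lookup (lKprod c (Suc t)) n = 0"
  proof (intro allI impI)
    fix n assume "int (Suc t) < \<bar>n\<bar>"
    then have "int t < \<bar>n - 1\<bar>" "int t < \<bar>n + 1\<bar>" by auto
    then show "lookup (lKprod c (Suc t)) n = 0" by (simp add: P lookup_mult_lKbr v)
  qed
  have B: "lookup (lKprod c (Suc t)) (int (Suc t)) = (\<Prod>i<Suc t. qpow (c - int i) / qdiff)"
  proof -
    have "int t < \<bar>int (Suc t) + 1\<bar>" by simp
    then have "lookup (lKprod c t) (int (Suc t) + 1) = 0" by (rule v)
    then show ?thesis using Suc.IH by (simp add: P lookup_mult_lKbr)
  qed
  have C: "lookup (lKprod c (Suc t)) (- int (Suc t)) = (\<Prod>i<Suc t. - (qpow (- (c - int i)) / qdiff))"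
  proof -
    have "int t < \<bar>- int (Suc t) - 1\<bar>" by simp
    then have "lookup (lKprod c t) (- int (Suc t) - 1) = 0" by (rule v)
    moreover have "- int (Suc t) + 1 = - int t" by simp
    ultimately show ?thesis using Suc.IH by (simp add: P lookup_mult_lKbr)
  qed
  show ?case using A B C by blast
qed

lemma lookup_lKbin: "lookup (lKbin c t) n = inverse (qfact t) * lookup (lKprod c t) n"
  by (simp add: lKbin_def lKprod_def)

lemma lookup_lKbin_outside: "int t < \<bar>n\<bar> \<Longrightarrow> lookup (lKbin c t) n = 0"
  using lookup_lKprod_extreme[of t c] by (simp add: lookup_lKbin)

lemma lookup_lKbin_1_top: "lookup (lKbin 1 t) (int t) = qpow (int t) * lookup (lKbin 0 t) (int t)"
proof -
  have "(\<Prod>i<t. qpow (1 - int i) / qdiff) = (\<Prod>i<t. qq * (qpow (0 - int i) / qdiff))"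
    by (rule prod.cong) (simp_all add: qpow_diff qpow_minus field_simps)
  also have "\<dots> = (\<Prod>i<t. qq) * (\<Prod>i<t. qpow (0 - int i) / qdiff)" by (rule prod.distrib)
  also have "(\<Prod>i<t. qq) = qpow (int t)" by simp
  finally show ?thesis using lookup_lKprod_extreme[of t 1] lookup_lKprod_extreme[of t 0] by (simp add: lookup_lKbin)
qed

lemma lookup_lKbin_1_bottom: "lookup (lKbin 1 t) (- int t) = qpow (- int t) * lookup (lKbin 0 t) (- int t)"
proof -
  have "(\<Prod>i<t. - (qpow (- (1 - int i)) / qdiff)) = (\<Prod>i<t. inverse qq * (- (qpow (- (0 - int i)) / qdiff)))"
    by (rule prod.cong) (simp_all add: qpow_diff qpow_minus field_simps)
  also have "\<dots> = (\<Prod>i<t. inverse qq) * (\<Prod>i<t. - (qpow (- (0 - int i)) / qdiff))" by (rule prod.distrib)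
  also have "(\<Prod>i<t. inverse qq) = qpow (- int t)" by (simp add: qpow_minus power_inverse)
  finally show ?thesis using lookup_lKprod_extreme[of t 1] lookup_lKprod_extreme[of t 0] by (simp add: lookup_lKbin)
qed

lemma lookup_lKbin_0_top_nonzero: "lookup (lKbin 0 t) (int t) \<noteq> 0"
  using lookup_lKprod_extreme[of t 0] by (simp add: lookup_lKbin)

lemma lookup_lKbin_0_bottom_nonzero: "lookup (lKbin 0 t) (- int t) \<noteq> 0"
  using lookup_lKprod_extreme[of t 0] by (simp add: lookup_lKbin)

lemma lKbin_top_pair_zero:
  assumes "T > 0"
    and top: "x * lookup (lKbin 0 T) (int T) + y * lookup (lKbin 1 T) (int T) = 0"
    and bottom: "x * lookup (lKbin 0 T) (- int T) + y * lookup (lKbin 1 T) (- int T) = 0"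
  shows "x = 0 \<and> y = 0"
proof -
  have "(x + y * qpow (int T)) * lookup (lKbin 0 T) (int T) = 0"
    using top by (simp add: lookup_lKbin_1_top algebra_simps)
  then have x_top: "x + y * qpow (int T) = 0"
    using lookup_lKbin_0_top_nonzero[of T] by simp
  have "(x + y * qpow (- int T)) * lookup (lKbin 0 T) (- int T) = 0"
    using bottom by (simp add: lookup_lKbin_1_bottom algebra_simps)
  then have x_bottom: "x + y * qpow (- int T) = 0"
    using lookup_lKbin_0_bottom_nonzero[of T] by simp
  have "y * (qpow (int T) - qpow (- int T)) = (x + y * qpow (int T)) - (x + y * qpow (- int T))"
    by (simp add: right_diff_distrib)
  then have "y * (qpow (int T) - qpow (- int T)) = 0"
    using x_top x_bottom by simp
  moreover have "qpow (int T) \<noteq> qpow (- int T)"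
    unfolding qpow_inj using \<open>T > 0\<close> by simp
  ultimately have "y = 0" by simp
  with x_top show ?thesis by simp
qed

lemma sum_lKbin_extreme:
  assumes "finite S" "S \<subseteq> cartan_index" "\<forall>p\<in>S. snd p \<le> T" "\<bar>n\<bar> = int T"
  shows "(\<Sum>p\<in>S. d p * lookup (lKbin (fst p) (snd p)) n)
       = (if (0, T) \<in> S then d (0, T) else 0) * lookup (lKbin 0 T) n
       + (if (1, T) \<in> S then d (1, T) else 0) * lookup (lKbin 1 T) n"
proof -
  let ?g = "\<lambda>p. d p * lookup (lKbin (fst p) (snd p)) n"
  have "(\<Sum>p\<in>S. ?g p) = (\<Sum>p\<in>S \<inter> {(0, T), (1, T)}. ?g p)"
  proof (rule sum.mono_neutral_right)
    show "\<forall>p\<in>S - S \<inter> {(0, T), (1, T)}. ?g p = 0"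
      using assms(2-4) by (force simp: cartan_index_def intro: lookup_lKbin_outside)
  qed (use assms(1) in auto)
  also have "\<dots> = (\<Sum>p\<in>{(0, T), (1, T)}. if p \<in> S then ?g p else 0)"
    by (simp add: sum.inter_restrict Int_commute)
  finally show ?thesis by simp
qed

lemma lKbin_independent_bounded:
  assumes "finite S" "S \<subseteq> cartan_index" "\<forall>p\<in>S. snd p \<le> T"
    and "\<And>n. (\<Sum>p\<in>S. d p * lookup (lKbin (fst p) (snd p)) n) = 0"
  shows "\<forall>p\<in>S. d p = 0"
  using assms
proof (induction T arbitrary: S)
  case 0
  then have "S \<subseteq> {(0, 0)}" by (fastforce simp: cartan_index_def)
  then show ?case using "0.prems"(4)[of 0] by (auto simp: subset_singleton_iff lookup_lconst)
next
  case (Suc T)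
  let ?x = "if (0, Suc T) \<in> S then d (0, Suc T) else 0"
  let ?y = "if (1, Suc T) \<in> S then d (1, Suc T) else 0"
  have extreme: "?x * lookup (lKbin 0 (Suc T)) n + ?y * lookup (lKbin 1 (Suc T)) n = 0"
    if "\<bar>n\<bar> = int (Suc T)" for n
    using Suc.prems(4)[of n] sum_lKbin_extreme[OF Suc.prems(1-3) that, of d] by metis
  have "?x = 0 \<and> ?y = 0"
  proof (rule lKbin_top_pair_zero)
    show "0 < Suc T" by simp
  qed (rule extreme, simp)+
  then have top: "d p = 0" if "p \<in> S" "snd p = Suc T" for p
    using that Suc.prems(2) by (cases p) (auto simp: cartan_index_def split: if_splits)
  define S' where "S' = {p \<in> S. snd p \<le> T}"
  have "(\<Sum>p\<in>S. d p * lookup (lKbin (fst p) (snd p)) n) = (\<Sum>p\<in>S'. d p * lookup (lKbin (fst p) (snd p)) n)" for n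
    by (rule sum.mono_neutral_right) (use Suc.prems(1,3) top in \<open>fastforce simp: S'_def le_Suc_eq\<close>)+
  then have "\<forall>p\<in>S'. d p = 0"
    using Suc.prems by (intro Suc.IH) (auto simp: S'_def)
  then show ?case
    using top Suc.prems(3) unfolding S'_def by (metis (mono_tags, lifting) le_SucE mem_Collect_eq)
qed

lemma lKbin_independent:
  assumes "finite S" "inj_on \<kappa> S" "\<kappa> ` S \<subseteq> cartan_index"
    and "\<And>n. (\<Sum>j\<in>S. d j * lookup (case_prod lKbin (\<kappa> j)) n) = 0"
  shows "\<forall>j\<in>S. d j = 0"
proof -
  obtain T where "\<forall>p\<in>\<kappa> ` S. snd p \<le> T"
    using finite_nat_set_iff_bounded_le[of "snd ` \<kappa> ` S"] assms(1) by auto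
  moreover have "(\<Sum>p\<in>\<kappa> ` S. d (the_inv_into S \<kappa> p) * lookup (lKbin (fst p) (snd p)) n) = 0" for n
    using assms(4)[of n] by (simp add: sum.reindex[OF assms(2)] the_inv_into_f_f[OF assms(2)] case_prod_beta)
  ultimately have "\<forall>p\<in>\<kappa> ` S. d (the_inv_into S \<kappa> p) = 0"
    using assms(1,3) by (intro lKbin_independent_bounded) auto
  then show ?thesis by (simp add: the_inv_into_f_f[OF assms(2)])
qed

lemma rep_scal_pbw_basis_vacuum:
  "rep (scal x (pbw_basis (a', b', t, c))) (slice 0 1 0) (int a) n (int b)
     = (if a' = a \<and> b' = b then inverse (qfact a) * inverse (qfact b) * (x * lookup (lKbin c t) n) else 0)"
proof -
  have "rep (pbw_basis (a', b', t, c)) (slice 0 1 0)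
      = vscale (inverse (qfact a') * inverse (qfact b')) (slice (int a') (lKbin c t) (int b'))"
    using rep_ueq[OF pbw_basis_pbw_term[of a' b' t c], of "slice 0 1 0"]
    unfolding pbw_term_def rep_pbw_term_vacuum .
  then show ?thesis by (auto simp: rep_scal vscale_def slice_def)
qed

lemma pbw_relation_coeffs:
  assumes "(\<Sum>j\<in>S. scal (c j) (pbw_basis j)) \<in> relideal"
  shows "(\<Sum>(a', b', t, c')\<in>S. if a' = a \<and> b' = b then c (a', b', t, c') * lookup (lKbin c' t) n else 0) = 0"
proof -
  have "rep (scal (c j) (pbw_basis j)) (slice 0 1 0) (int a) n (int b)
      = inverse (qfact a) * inverse (qfact b)
        * (case j of (a', b', t, c') \<Rightarrow> if a' = a \<and> b' = b then c (a', b', t, c') * lookup (lKbin c' t) n else 0)"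
    for j by (cases j) (simp add: rep_scal_pbw_basis_vacuum)
  then have "inverse (qfact a) * inverse (qfact b)
      * (\<Sum>(a', b', t, c')\<in>S. if a' = a \<and> b' = b then c (a', b', t, c') * lookup (lKbin c' t) n else 0)
      = rep (\<Sum>j\<in>S. scal (c j) (pbw_basis j)) (slice 0 1 0) (int a) n (int b)"
    by (simp only: rep_sum sum_distrib_left)
  also have "\<dots> = 0" using rep_relideal[OF assms] by (simp add: vzero_def)
  finally show ?thesis by simp
qed

lemma pbw_independent:
  assumes "finite S" "S \<subseteq> pbw_index" "(\<Sum>j\<in>S. scal (c j) (pbw_basis j)) \<in> relideal"
  shows "\<forall>j\<in>S. c j = 0"
proof
  fix j assume "j \<in> S"
  obtain a b t c0 where j: "j = (a, b, t, c0)" by (cases j)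
  define S' where "S' = {(a', b', t', c') \<in> S. a' = a \<and> b' = b}"
  define \<kappa> where "\<kappa> = (\<lambda>(a' :: nat, b' :: nat, t' :: nat, c' :: int). (c', t'))"
  have "S' \<subseteq> S" by (auto simp: S'_def)
  have "(\<Sum>j\<in>S'. c j * lookup (case_prod lKbin (\<kappa> j)) n) = 0" for n
  proof -
    have "S \<inter> S' = S'" using \<open>S' \<subseteq> S\<close> by auto
    then have "(\<Sum>j\<in>S'. c j * lookup (case_prod lKbin (\<kappa> j)) n)
        = (\<Sum>j\<in>S. if j \<in> S' then c j * lookup (case_prod lKbin (\<kappa> j)) n else 0)"
      by (simp only: sum.inter_restrict[OF assms(1), symmetric])
    also have "\<dots> = (\<Sum>(a', b', t, c')\<in>S. if a' = a \<and> b' = b then c (a', b', t, c') * lookup (lKbin c' t) n else 0)"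
    proof (rule sum.cong)
      show "(if j \<in> S' then c j * lookup (case_prod lKbin (\<kappa> j)) n else 0)
          = (case j of (a', b', t, c') \<Rightarrow> if a' = a \<and> b' = b then c (a', b', t, c') * lookup (lKbin c' t) n else 0)"
        if "j \<in> S" for j
        using that by (cases j) (simp add: S'_def \<kappa>_def)
    qed simp
    also have "\<dots> = 0" by (rule pbw_relation_coeffs[OF assms(3)])
    finally show ?thesis .
  qed
  moreover have "inj_on \<kappa> S'" by (auto simp: inj_on_def S'_def \<kappa>_def)
  moreover have "\<kappa> ` S' \<subseteq> cartan_index"
    using assms(2) by (auto simp: S'_def \<kappa>_def pbw_index_def cartan_index_def)
  ultimately have "\<forall>j\<in>S'. c j = 0"
    using finite_subset[OF \<open>S' \<subseteq> S\<close> assms(1)] by (intro lKbin_independent)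
  then show "c j = 0" using \<open>j \<in> S\<close> by (simp add: S'_def j)
qed

lemma cartan_independent:
  assumes "finite S" "S \<subseteq> cartan_index" "(\<Sum>j\<in>S. scal (c j) (cartan_basis j)) \<in> relideal"
  shows "\<forall>j\<in>S. c j = 0"
proof -
  define \<iota> where "\<iota> = (\<lambda>(c :: int, t :: nat). (0 :: nat, 0 :: nat, t, c))"
  have inj: "inj_on \<iota> S" by (auto simp: inj_on_def \<iota>_def)
  have "cartan_basis p = pbw_basis (\<iota> p)" for p
    by (cases p) (simp add: \<iota>_def cartan_basis_def pbw_basis_def)
  then have "(\<Sum>k\<in>\<iota> ` S. scal (c (the_inv_into S \<iota> k)) (pbw_basis k)) \<in> relideal"
    using assms(3) by (simp add: sum.reindex[OF inj] the_inv_into_f_f[OF inj])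
  moreover have "\<iota> ` S \<subseteq> pbw_index"
    using assms(2) by (auto simp: \<iota>_def cartan_index_def pbw_index_def)
  ultimately have "\<forall>k\<in>\<iota> ` S. c (the_inv_into S \<iota> k) = 0"
    using assms(1) by (intro pbw_independent) auto
  then show ?thesis by (simp add: the_inv_into_f_f[OF inj])
qed

section \<open>The basis elements lie in the integral forms\<close>

lemma in_Asubalg_iff: "in_Asubalg G x \<longleftrightarrow> (\<exists>y\<in>Asubalg G. x \<doteq> y)"
  by (simp add: in_Asubalg_def ueq_def)

lemma in_Asubalg_gen: "g \<in> G \<Longrightarrow> in_Asubalg G g"
  by (auto simp: in_Asubalg_iff intro!: bexI[of _ g] Asubalg.gen)

lemma in_Asubalg_mult: "in_Asubalg G x \<Longrightarrow> in_Asubalg G y \<Longrightarrow> in_Asubalg G (x * y)"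
  unfolding in_Asubalg_iff by (blast intro: Asubalg.mult ueq_mult)

lemma Kbin_1_Suc:
  "Kbin 1 (Suc s) \<doteq> scal (qpow (int s + 1)) (Kbin 0 (Suc s)) + scal (qpow (int s)) (Ki * Kbin 0 s)"
proof -
  have "Kbin 1 (Suc s) \<doteq> evalK (lKbin 1 (Suc s))" by (rule ueq_sym[OF evalK_lKbin])
  also have "evalK (lKbin 1 (Suc s))
      = scal (qpow (int s + 1)) (evalK (lKbin 0 (Suc s))) + scal (qpow (int s)) (evalK (lKinv * lKbin 0 s))"
    using lKbin_Suc_shift[of 0 s] by (simp add: evalK_add evalK_lconst_mult)
  also have "evalK (lKinv * lKbin 0 s) \<doteq> Ki * Kbin 0 s"
    using evalK_mult[of lKinv "lKbin 0 s"] ueq_mult_left[OF evalK_lKbin, of Ki 0 s]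
    by (simp add: evalK_lKinv ueq_trans)
  then have "scal (qpow (int s + 1)) (evalK (lKbin 0 (Suc s))) + scal (qpow (int s)) (evalK (lKinv * lKbin 0 s))
      \<doteq> scal (qpow (int s + 1)) (Kbin 0 (Suc s)) + scal (qpow (int s)) (Ki * Kbin 0 s)"
    by (intro ueq_add ueq_scal evalK_lKbin)
  finally show ?thesis .
qed

lemma Kbin_in_Asubalg:
  assumes "Ki \<in> G" "range (Kbin 0) \<subseteq> G" "(c, t) \<in> cartan_index"
  shows "in_Asubalg G (Kbin c t)"
proof -
  consider "c = 0" | s where "c = 1" "t = Suc s"
    using assms(3) by (auto simp: cartan_index_def dest: Suc_le_D)
  then show ?thesis
  proof cases
    case 1 then show ?thesis using assms(2) by (auto intro: in_Asubalg_gen)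
  next
    case 2
    have "scal (qpow (int s + 1)) (Kbin 0 (Suc s)) + scal (qpow (int s)) (Ki * Kbin 0 s) \<in> Asubalg G"
      using assms(1,2) by (intro Asubalg.add Asubalg.smult Asubalg.mult Asubalg.gen Laurent_qpow) auto
    then show ?thesis unfolding 2 in_Asubalg_iff using Kbin_1_Suc by blast
  qed
qed

lemma is_A_basisI:
  assumes "\<And>j. j \<in> J \<Longrightarrow> M (b j)"
    and "\<And>S c. finite S \<Longrightarrow> S \<subseteq> J \<Longrightarrow> (\<Sum>j\<in>S. scal (c j) (b j)) \<in> relideal \<Longrightarrow> \<forall>j\<in>S. c j = 0"
    and "\<And>x. M x \<Longrightarrow> x \<in> A_span J b"
  shows "is_A_basis M J b"
  unfolding is_A_basis_def
proof (intro conjI allI impI ballI)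
  show "M (b j)" if "j \<in> J" for j using that by (rule assms(1))
  show "c j = 0"
    if "finite S" "S \<subseteq> J" "(\<Sum>j\<in>S. scal (c j) (b j)) \<in> relideal" "j \<in> S" for S c j
    using assms(2) that by blast
  show "\<exists>S c. finite S \<and> S \<subseteq> J \<and> (\<forall>j\<in>S. c j \<in> Laurent) \<and> x - (\<Sum>j\<in>S. scal (c j) (b j)) \<in> relideal"
    if "M x" for x
    using assms(3)[OF that] by (simp add: A_span_def)
qed

lemma cartan_basis_in_Asubalg: "j \<in> cartan_index \<Longrightarrow> in_Asubalg U0A_gens (cartan_basis j)"
  using Kbin_in_Asubalg[of U0A_gens "fst j" "snd j"]
  by (simp add: U0A_gens_def cartan_basis_def split_beta subset_insertI2)

lemma pbw_basis_in_Asubalg: "j \<in> pbw_index \<Longrightarrow> in_Asubalg UA_gens (pbw_basis j)"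
proof -
  assume "j \<in> pbw_index"
  moreover obtain a b t c where j: "j = (a, b, t, c)" by (cases j)
  ultimately have "(c, t) \<in> cartan_index"
    by (auto simp: pbw_index_def cartan_index_def min_def split: if_splits)
  then have "in_Asubalg UA_gens (Kbin c t)" by (intro Kbin_in_Asubalg) (auto simp: UA_gens_def)
  moreover have "in_Asubalg UA_gens (Fdiv a)" "in_Asubalg UA_gens (Ediv b)"
    by (auto simp: UA_gens_def intro: in_Asubalg_gen)
  ultimately show ?thesis by (simp add: j pbw_basis_def in_Asubalg_mult)
qed

theorem proposition5p3:
  shows "is_A_basis (in_Asubalg U0A_gens)
           {(c, t). c = 0 \<or> (c = 1 \<and> t \<ge> 1)} (\<lambda>(c, t). Kbin c t)
       \<and> is_A_basis (in_Asubalg UA_gens)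
           {(a, b, t, c). c = 0 \<or> c = int (min 1 t)}
           (\<lambda>(a, b, t, c). Fdiv a * Kbin c t * Ediv b)"
proof -
  have "is_A_basis (in_Asubalg U0A_gens) cartan_index cartan_basis"
    using cartan_basis_in_Asubalg cartan_independent cartan_spanning by (rule is_A_basisI)
  moreover have "is_A_basis (in_Asubalg UA_gens) pbw_index pbw_basis"
    using pbw_basis_in_Asubalg pbw_independent pbw_spanning by (rule is_A_basisI)
  ultimately show ?thesis
    by (simp add: cartan_index_def cartan_basis_def pbw_index_def pbw_basis_def)
qed

end
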